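(* Assume (S) with $a>0$. There is a constant $c_1>0$, independent of $\delta\in(0,1)$, such that for all $u\in\bar S_0$ and all $\delta\in(0,1)$, $$\frac\beta2\|\partial_x^2u\|_{L_2(D)}^2+\frac a4\|\partial_xu\|_{L_2(D)}^2\le E_\delta(u)+c_1.$$
   Context: Standing setting (S): $L>0$, $D=(-L,L)$, $H>0$, $\mathcal R_\delta=D\times(-H-\delta,-H)$; $\Omega_\delta(u)=\{(x,z):x\in D,\ -H-\delta<z<u(x)\}$; $\bar S_0=\{u\in H^2(D):u(\pm L)=\partial_xu(\pm L)=0,\ u\ge-H\}$. $\sigma\in C^2(\bar D\times[-H-1,-H])$, $\sigma>0$; $\sigma_\delta=\delta\sigma$ on $\mathcal R_\delta$, $=1$ on $D\times(-H,\infty)$. $h_b\in C^2(\bar D\times[-H-1,-H]\times[-H,\infty))$, $h\in C^2(\bar D\times[-H,\infty)\times[-H,\infty))$ with $h_b(x,-H,w)=h(x,-H,w)$, $\sigma(x,-H)\partial_zh_b(x,-H,w)=\partial_zh(x,-H,w)$, and with $m>0$: $|\partial_xh_b|+|\partial_zh_b|\le\sqrt{m(1+w^2)}$, $|\partial_wh_b|\le\sqrt m$, $|\partial_xh|+|\partial_zh|\le\sqrt{m(1+w^2)/(H+w)}$, $|\partial_wh|\le\sqrt{m/(H+w)}$. $h_{u,\delta}(x,z)=h_b(x,-H+(z+H)/\delta,u(x))$ for $z<-H$, $=h(x,z,u(x))$ for $z\ge-H$. $\psi_{u,\delta}$: unique $\psi$ with $\psi-h_{u,\delta}\in H^1_0(\Omega_\delta(u))$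 minimizing $\int_{\Omega_\delta(u)}\sigma_\delta|\nabla\psi|^2$. With $\beta>0,\tau\ge0,a\ge0$: $E_\delta(u)=\frac\beta2\|\partial_x^2u\|_{L_2}^2+(\frac\tau2+\frac a4\|\partial_xu\|_{L_2}^2)\|\partial_xu\|_{L_2}^2-\frac12\int_{\Omega_\delta(u)}\sigma_\delta|\nabla\psi_{u,\delta}|^2$. *)

theory Defs
  imports "HOL-Analysis.Analysis"
begin

type_synonym pt2 = "real \<times> real"
type_synonym pt3 = "real \<times> real \<times> real"

definition C2_on :: "'a::real_normed_vector set \<Rightarrow> ('a \<Rightarrow> real) \<Rightarrow> ('a \<Rightarrow> 'a \<Rightarrow>\<^sub>L real) \<Rightarrow> bool" where
  "C2_on K f Df \<longleftrightarrow>
     (\<forall>p\<in>K. (f has_derivative blinfun_apply (Df p)) (at p within K)) \<and>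
     (\<exists>D2f :: 'a \<Rightarrow> 'a \<Rightarrow>\<^sub>L ('a \<Rightarrow>\<^sub>L real).
        (\<forall>p\<in>K. (Df has_derivative blinfun_apply (D2f p)) (at p within K)) \<and> continuous_on K D2f)"

definition smooth2 :: "(pt2 \<Rightarrow> real) \<Rightarrow> bool" where
  "smooth2 f \<longleftrightarrow> (\<exists>S :: (pt2 \<Rightarrow> real) set. f \<in> S \<and>
     (\<forall>g\<in>S. \<exists>g1\<in>S. \<exists>g2\<in>S. \<forall>p.
        (g has_derivative (\<lambda>v. fst v * g1 p + snd v * g2 p)) (at p)))"

definition test_fn :: "pt2 set \<Rightarrow> (pt2 \<Rightarrow> real) \<Rightarrow> bool" where
  "test_fn \<Omega> \<phi> \<longleftrightarrow> smooth2 \<phi> \<and> compact (closure {p. \<phi> p \<noteq> 0})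
      \<and> closure {p. \<phi> p \<noteq> 0} \<subseteq> \<Omega>"

definition grad2 :: "(pt2 \<Rightarrow> real) \<Rightarrow> pt2 \<Rightarrow> pt2" where
  "grad2 \<phi> p = (frechet_derivative \<phi> (at p) (1,0), frechet_derivative \<phi> (at p) (0,1))"

definition L2_on :: "'a::euclidean_space set \<Rightarrow> ('a \<Rightarrow> 'b::euclidean_space) \<Rightarrow> bool" where
  "L2_on S f \<longleftrightarrow> f measurable_on S \<and> (\<lambda>p. (norm (f p))\<^sup>2) integrable_on S"

definition weak_grad :: "pt2 set \<Rightarrow> (pt2 \<Rightarrow> real) \<Rightarrow> (pt2 \<Rightarrow> pt2) \<Rightarrow> bool" where
  "weak_grad \<Omega> f G \<longleftrightarrow> (\<forall>\<phi>. test_fn \<Omega> \<phi> \<longrightarrow>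
      integral \<Omega> (\<lambda>p. f p * fst (grad2 \<phi> p)) = - integral \<Omega> (\<lambda>p. fst (G p) * \<phi> p) \<and>
      integral \<Omega> (\<lambda>p. f p * snd (grad2 \<phi> p)) = - integral \<Omega> (\<lambda>p. snd (G p) * \<phi> p))"

definition H1_on :: "pt2 set \<Rightarrow> (pt2 \<Rightarrow> real) \<Rightarrow> (pt2 \<Rightarrow> pt2) \<Rightarrow> bool" where
  "H1_on \<Omega> f G \<longleftrightarrow> L2_on \<Omega> f \<and> L2_on \<Omega> G \<and> weak_grad \<Omega> f G"

definition H10_on :: "pt2 set \<Rightarrow> (pt2 \<Rightarrow> real) \<Rightarrow> bool" where
  "H10_on \<Omega> v \<longleftrightarrow> (\<exists>G. H1_on \<Omega> v G \<and>
     (\<exists>\<phi> :: nat \<Rightarrow> pt2 \<Rightarrow> real. (\<forall>n. test_fn \<Omega> (\<phi> n)) \<and>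
        (\<lambda>n. integral \<Omega> (\<lambda>p. (\<phi> n p - v p)\<^sup>2)) \<longlonglongrightarrow> 0 \<and>
        (\<lambda>n. integral \<Omega> (\<lambda>p. (norm (grad2 (\<phi> n) p - G p))\<^sup>2)) \<longlonglongrightarrow> 0))"

text \<open>u in H^2(-L,L) (continuous representative), with u1 = u' (C^0, absolutely continuous)
  and u2 = u'' in L2.\<close>
definition H2_repr :: "real \<Rightarrow> (real \<Rightarrow> real) \<Rightarrow> (real \<Rightarrow> real) \<Rightarrow> (real \<Rightarrow> real) \<Rightarrow> bool" where
  "H2_repr L u u1 u2 \<longleftrightarrow> L2_on {-L..L} u2 \<and>
     (\<forall>x\<in>{-L..L}. (u has_real_derivative u1 x) (at x within {-L..L})) \<and>
     (\<forall>x\<in>{-L..L}. u1 x = u1 (-L) + integral {-L..x} u2)"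

definition barS0 :: "real \<Rightarrow> real \<Rightarrow> (real \<Rightarrow> real) \<Rightarrow> (real \<Rightarrow> real) \<Rightarrow> (real \<Rightarrow> real) \<Rightarrow> bool" where
  "barS0 L H u u1 u2 \<longleftrightarrow> H2_repr L u u1 u2 \<and> u (-L) = 0 \<and> u L = 0 \<and> u1 (-L) = 0 \<and> u1 L = 0
     \<and> (\<forall>x\<in>{-L..L}. u x \<ge> -H)"

definition Omega_d :: "real \<Rightarrow> real \<Rightarrow> real \<Rightarrow> (real \<Rightarrow> real) \<Rightarrow> pt2 set" where
  "Omega_d L H \<delta> u = {(x,z). -L < x \<and> x < L \<and> -H - \<delta> < z \<and> z < u x}"

definition sigma_d :: "real \<Rightarrow> real \<Rightarrow> (pt2 \<Rightarrow> real) \<Rightarrow> pt2 \<Rightarrow> real" where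
  "sigma_d H \<delta> \<sigma> p = (if snd p < -H then \<delta> * \<sigma> p else 1)"

definition h_ud :: "real \<Rightarrow> real \<Rightarrow> (pt3 \<Rightarrow> real) \<Rightarrow> (pt3 \<Rightarrow> real) \<Rightarrow> (real \<Rightarrow> real) \<Rightarrow> pt2 \<Rightarrow> real" where
  "h_ud H \<delta> hb h u p = (case p of (x,z) \<Rightarrow>
      if z < -H then hb (x, -H + (z + H) / \<delta>, u x) else h (x, z, u x))"

text \<open>Dirichlet energies of admissible functions; the energy of the minimiser psi_{u,delta}
  is the infimum (= minimum) of this set.\<close>
definition dirichlet_energies :: "real \<Rightarrow> real \<Rightarrow> (pt2 \<Rightarrow> real) \<Rightarrow> (pt3 \<Rightarrow> real) \<Rightarrow> (pt3 \<Rightarrow> real)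
    \<Rightarrow> real \<Rightarrow> (real \<Rightarrow> real) \<Rightarrow> real set" where
  "dirichlet_energies L H \<sigma> hb h \<delta> u =
     {integral (Omega_d L H \<delta> u) (\<lambda>p. sigma_d H \<delta> \<sigma> p * (norm (G p))\<^sup>2) | \<psi> G.
        H1_on (Omega_d L H \<delta> u) \<psi> G \<and>
        H10_on (Omega_d L H \<delta> u) (\<lambda>p. \<psi> p - h_ud H \<delta> hb h u p)}"

definition E_d :: "real \<Rightarrow> real \<Rightarrow> real \<Rightarrow> real \<Rightarrow> real \<Rightarrow> (pt2 \<Rightarrow> real) \<Rightarrow> (pt3 \<Rightarrow> real) \<Rightarrow> (pt3 \<Rightarrow> real)
    \<Rightarrow> real \<Rightarrow> (real \<Rightarrow> real) \<Rightarrow> (real \<Rightarrow> real) \<Rightarrow> (real \<Rightarrow> real) \<Rightarrow> real" where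
  "E_d \<beta> \<tau> a L H \<sigma> hb h \<delta> u u1 u2 =
     \<beta> / 2 * integral {-L..L} (\<lambda>x. (u2 x)\<^sup>2)
     + (\<tau> / 2 + a / 4 * integral {-L..L} (\<lambda>x. (u1 x)\<^sup>2)) * integral {-L..L} (\<lambda>x. (u1 x)\<^sup>2)
     - 1 / 2 * Inf (dirichlet_energies L H \<sigma> hb h \<delta> u)"

end

theory Submission
  imports Defs
begin

text \<open>
  Since psi_{u,\<delta>} minimises the weighted Dirichlet energy, E_\<delta>(u) only decreases if psi_{u,\<delta>}
  is replaced by the boundary datum h_{u,\<delta>} itself, which is admissible: it is piecewise C^1 and
  continuous across z = -H, so its piecewise chain-rule gradient is a weak gradient.  In the layer of
  height \<delta> the weight \<delta>\<sigma> and the factor 1/\<delta> of the stretched z-derivative balance, and the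
  growth bounds on Dhb and Dh give sigma_\<delta> |grad h_{u,\<delta>}|^2 <= C (1 + u^2 + u'^2)/\<delta> below the
  interface and <= C (1 + |u| + u'^2) above it, over a height of at most H + sup |u|.  As u(-L) = 0,
  sup |u| <= e ||u'||^2 + L/(2e) for every e > 0; for e small the Dirichlet energy of h_{u,\<delta>} is
  therefore at most (a/4) ||u'||^4 + C ||u'||^2 + C, uniformly in \<delta>.  Half of this is absorbed by the
  quartic term of E_\<delta>, and the remaining quadratic term by the leftover (a/8) ||u'||^4.
\<close>

lemma negligible_horizontal_line: "negligible {p::real\<times>real. snd p = c}"
proof -
  have "{p::real\<times>real. snd p = c} = {x. x \<bullet> (0,1) = c}" by (auto simp: inner_prod_def)
  moreover have "(0::real, 1::real) \<in> Basis" by (simp add: Basis_prod_def)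
  ultimately show ?thesis using negligible_standard_hyperplane by metis
qed

lemma integrable_on_bounded_measurable:
  fixes f :: "'a::euclidean_space \<Rightarrow> 'b::euclidean_space"
  assumes f: "f measurable_on S" and S: "S \<in> lmeasurable" and B: "\<And>x. x \<in> S \<Longrightarrow> norm (f x) \<le> B"
  shows "f integrable_on S"
proof (rule measurable_bounded_by_integrable_imp_integrable[OF _ _ B])
  show S': "S \<in> sets lebesgue" using S by (simp add: fmeasurableD)
  show "f \<in> borel_measurable (lebesgue_on S)" using f measurable_on_iff_borel_measurable[OF S'] by blast
  show "(\<lambda>x. B) integrable_on S" using S by (rule integrable_on_const)
qed

lemma L2_on_bounded_measurable:
  fixes f :: "'a::euclidean_space \<Rightarrow> 'b::euclidean_space"
  assumes f: "f measurable_on S" and S: "S \<in> lmeasurable" and B: "\<And>x. x \<in> S \<Longrightarrow> norm (f x) \<le> B"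
  shows "L2_on S f"
  unfolding L2_on_def
proof
  have "(\<lambda>x. (norm (f x))\<^sup>2) measurable_on S"
    using measurable_on_compose_continuous_0[OF f, of "\<lambda>y. (norm y)\<^sup>2"]
    by (simp add: o_def continuous_intros)
  then show "(\<lambda>x. (norm (f x))\<^sup>2) integrable_on S"
    by (rule integrable_on_bounded_measurable[OF _ S, where B = "B\<^sup>2"])
       (simp add: B norm_ge_zero power_mono)
qed (rule f)

lemma measurable_on_split_horizontal:
  fixes f f1 f2 :: "real\<times>real \<Rightarrow> 'b::euclidean_space"
  assumes \<Omega>: "open \<Omega>"
    and c1: "continuous_on (\<Omega> \<inter> {p. snd p < c}) f1" and c2: "continuous_on (\<Omega> \<inter> {p. c < snd p}) f2"
    and e1: "\<And>p. p \<in> \<Omega> \<Longrightarrow> snd p < c \<Longrightarrow> f p = f1 p"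
    and e2: "\<And>p. p \<in> \<Omega> \<Longrightarrow> c < snd p \<Longrightarrow> f p = f2 p"
  shows "f measurable_on \<Omega>"
proof -
  let ?O1 = "\<Omega> \<inter> {p. snd p < c}" and ?O2 = "\<Omega> \<inter> {p. c < snd p}"
  have "open ?O1" "open ?O2" by (intro open_Int \<Omega> open_Collect_less continuous_intros)+
  then have L: "?O1 \<in> sets lebesgue" "?O2 \<in> sets lebesgue" by (simp_all add: borel_open)
  have m1: "f1 measurable_on ?O1"
    using measurable_on_iff_borel_measurable[OF L(1)] continuous_imp_measurable_on_sets_lebesgue[OF c1 L(1)]
    by blast
  have m2: "f2 measurable_on ?O2"
    using measurable_on_iff_borel_measurable[OF L(2)] continuous_imp_measurable_on_sets_lebesgue[OF c2 L(2)]
    by blast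
  have "(\<lambda>x. (if x \<in> ?O1 then f1 x else 0) + (if x \<in> ?O2 then f2 x else 0)) measurable_on UNIV"
    by (rule measurable_on_add) (use m1 m2 measurable_on_UNIV in blast)+
  then have "(\<lambda>x. if x \<in> \<Omega> then f x else 0) measurable_on UNIV"
  proof (rule measurable_on_spike[OF _ negligible_horizontal_line[of c]])
    fix x :: "real\<times>real" assume "x \<in> UNIV - {p. snd p = c}"
    then have "snd x < c \<or> c < snd x" by auto
    then show "(if x \<in> \<Omega> then f x else 0) = (if x \<in> ?O1 then f1 x else 0) + (if x \<in> ?O2 then f2 x else 0)"
      using e1 e2 by auto
  qed
  then show ?thesis using measurable_on_UNIV by blast
qed

lemma has_integral_stacked_boxes:
  fixes f f1 f2 :: "real\<times>real \<Rightarrow> real"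
  assumes sub: "\<Omega> \<subseteq> cbox (a,c1) (b,c) \<union> cbox (a,c) (b,c2)"
    and cont1: "continuous_on (cbox (a,c1) (b,c)) f1" and cont2: "continuous_on (cbox (a,c) (b,c2)) f2"
    and e1: "\<And>p. p \<in> cbox (a,c1) (b,c) \<Longrightarrow> snd p < c \<Longrightarrow> (if p \<in> \<Omega> then f p else 0) = f1 p"
    and e2: "\<And>p. p \<in> cbox (a,c) (b,c2) \<Longrightarrow> c < snd p \<Longrightarrow> (if p \<in> \<Omega> then f p else 0) = f2 p"
  shows "(f has_integral (integral (cbox (a,c1) (b,c)) f1 + integral (cbox (a,c) (b,c2)) f2)) \<Omega>"
proof -
  let ?f = "\<lambda>p. if p \<in> \<Omega> then f p else 0"
  have "(?f has_integral (integral (cbox (a,c1) (b,c)) f1 + integral (cbox (a,c) (b,c2)) f2))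
      (cbox (a,c1) (b,c) \<union> cbox (a,c) (b,c2))"
  proof (rule has_integral_Un)
    show "(?f has_integral integral (cbox (a,c1) (b,c)) f1) (cbox (a,c1) (b,c))"
    proof (rule has_integral_spike[OF negligible_horizontal_line[of c]])
      show "(f1 has_integral integral (cbox (a,c1) (b,c)) f1) (cbox (a,c1) (b,c))"
        using cont1 integrable_continuous has_integral_integral by blast
      show "?f p = f1 p" if "p \<in> cbox (a,c1) (b,c) - {p. snd p = c}" for p
      proof (rule e1)
        show "snd p < c" using that by (cases p) (auto simp: cbox_Pair_iff less_le)
      qed (use that in blast)
    qed
    show "(?f has_integral integral (cbox (a,c) (b,c2)) f2) (cbox (a,c) (b,c2))"
    proof (rule has_integral_spike[OF negligible_horizontal_line[of c]])
      show "(f2 has_integral integral (cbox (a,c) (b,c2)) f2) (cbox (a,c) (b,c2))"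
        using cont2 integrable_continuous has_integral_integral by blast
      show "?f p = f2 p" if "p \<in> cbox (a,c) (b,c2) - {p. snd p = c}" for p
      proof (rule e2)
        show "snd p > c" using that by (cases p) (auto simp: cbox_Pair_iff less_le)
      qed (use that in blast)
    qed
    show "negligible (cbox (a,c1) (b,c) \<inter> cbox (a,c) (b,c2))"
      by (rule negligible_subset[OF negligible_horizontal_line[of c]]) (auto simp: cbox_Pair_iff)
  qed
  then show ?thesis using has_integral_restrict[OF sub] by blast
qed

lemma integral_cbox_deriv_snd:
  fixes Q q :: "real\<times>real \<Rightarrow> real"
  assumes cq: "continuous_on (cbox (a,c) (b,d)) q" and cd: "c \<le> d"
    and dQ: "\<And>x z. x \<in> {a..b} \<Longrightarrow> z \<in> {c..d} \<Longrightarrow>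
        ((\<lambda>z'. Q (x,z')) has_real_derivative q (x,z)) (at z within {c..d})"
  shows "integral (cbox (a,c) (b,d)) q = integral {a..b} (\<lambda>x. Q (x,d) - Q (x,c))"
proof -
  have "integral (cbox (a,c) (b,d)) q = integral (cbox a b) (\<lambda>x. integral (cbox c d) (\<lambda>y. q (x, y)))"
    by (rule integral_prod_continuous[OF cq])
  also have "\<dots> = integral (cbox a b) (\<lambda>x. Q (x,d) - Q (x,c))"
  proof (rule integral_cong)
    fix x assume "x \<in> cbox a b"
    then have "((\<lambda>y. q (x, y)) has_integral (Q (x,d) - Q (x,c))) {c..d}"
      using fundamental_theorem_of_calculus[OF cd, of "\<lambda>z. Q (x,z)" "\<lambda>y. q (x,y)"] dQ
      by (simp add: has_real_derivative_iff_has_vector_derivative)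
    then show "integral (cbox c d) (\<lambda>y. q (x, y)) = Q (x,d) - Q (x,c)"
      by (simp add: integral_unique)
  qed
  finally show ?thesis by (simp add: cbox_interval)
qed

lemma integral_cbox_deriv_fst:
  fixes Q q :: "real\<times>real \<Rightarrow> real"
  assumes cq: "continuous_on (cbox (a,c) (b,d)) q" and ab: "a \<le> b"
    and dQ: "\<And>x z. x \<in> {a..b} \<Longrightarrow> z \<in> {c..d} \<Longrightarrow>
        ((\<lambda>x'. Q (x',z)) has_real_derivative q (x,z)) (at x within {a..b})"
  shows "integral (cbox (a,c) (b,d)) q = integral {c..d} (\<lambda>z. Q (b,z) - Q (a,z))"
proof -
  have cq': "continuous_on (cbox (a,c) (b,d)) (\<lambda>(x,y). q (x,y))"
    using cq by (simp add: case_prod_beta')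
  have "integral (cbox (a,c) (b,d)) q = integral (cbox a b) (\<lambda>x. integral (cbox c d) (\<lambda>y. q (x, y)))"
    by (rule integral_prod_continuous[OF cq])
  also have "\<dots> = integral (cbox c d) (\<lambda>y. integral (cbox a b) (\<lambda>x. q (x, y)))"
    using integral_swap_continuous[OF cq'] by simp
  also have "\<dots> = integral (cbox c d) (\<lambda>z. Q (b,z) - Q (a,z))"
  proof (rule integral_cong)
    fix z assume "z \<in> cbox c d"
    then have "((\<lambda>x. q (x, z)) has_integral (Q (b,z) - Q (a,z))) {a..b}"
      using fundamental_theorem_of_calculus[OF ab, of "\<lambda>x. Q (x,z)" "\<lambda>x. q (x,z)"] dQ
      by (simp add: has_real_derivative_iff_has_vector_derivative)
    then show "integral (cbox a b) (\<lambda>x. q (x, z)) = Q (b,z) - Q (a,z)"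
      by (simp add: integral_unique)
  qed
  finally show ?thesis by (simp add: cbox_interval)
qed

lemma integral_cbox_depends_on_fst:
  fixes f :: "real \<Rightarrow> real"
  assumes f: "continuous_on (cbox (a,c) (b,d)) (\<lambda>p. f (fst p))" and cd: "c \<le> d"
  shows "integral (cbox (a,c) (b,d)) (\<lambda>p. f (fst p)) = (d - c) * integral {a..b} f"
  using integral_prod_continuous[OF f] cd by (simp add: cbox_interval content_real)

lemma DERIV_comp3_graph:
  fixes F :: "real\<times>real\<times>real \<Rightarrow> real" and DF :: "real\<times>real\<times>real \<Rightarrow> (real\<times>real\<times>real) \<Rightarrow>\<^sub>L real"
  assumes dF: "\<forall>q\<in>K. (F has_derivative blinfun_apply (DF q)) (at q within K)"
    and img: "\<forall>x'\<in>S. (x', z, w x') \<in> K" and x: "x \<in> S"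
    and dw: "(w has_real_derivative w') (at x within S)"
  shows "((\<lambda>x'. F (x', z, w x')) has_real_derivative
           (DF (x,z,w x) (1,0,0) + DF (x,z,w x) (0,0,1) * w')) (at x within S)"
proof -
  have dg: "((\<lambda>x'. (x', z, w x')) has_derivative (\<lambda>t. (t, 0, w' * t))) (at x within S)"
    using dw unfolding has_field_derivative_def
    by (intro has_derivative_Pair has_derivative_ident has_derivative_const) auto
  have "((\<lambda>x'. F (x', z, w x')) has_derivative (\<lambda>t. DF (x,z,w x) (t, 0, w' * t))) (at x within S)"
    by (rule has_derivative_in_compose2[where t=K and g=F and g'="\<lambda>q. blinfun_apply (DF q)", OF _ _ x dg])
       (use dF img in auto)
  moreover have "(\<lambda>t. DF (x,z,w x) (t, 0, w' * t)) = (*) (DF (x,z,w x) (1,0,0) + DF (x,z,w x) (0,0,1) * w')"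
  proof
    fix t
    have "(t, 0::real, w' * t) = t *\<^sub>R (1,0,0) + (w' * t) *\<^sub>R (0,0,1)" by simp
    then show "DF (x,z,w x) (t, 0, w' * t) = (DF (x,z,w x) (1,0,0) + DF (x,z,w x) (0,0,1) * w') * t"
      by (simp only: blinfun.add_right blinfun.scaleR_right) (simp add: algebra_simps)
  qed
  ultimately show ?thesis unfolding has_field_derivative_def by simp
qed

lemma DERIV_comp3_snd:
  fixes F :: "real\<times>real\<times>real \<Rightarrow> real" and DF :: "real\<times>real\<times>real \<Rightarrow> (real\<times>real\<times>real) \<Rightarrow>\<^sub>L real"
  assumes dF: "\<forall>q\<in>K. (F has_derivative blinfun_apply (DF q)) (at q within K)"
    and img: "\<forall>z'\<in>S. (x, k z', w) \<in> K" and z: "z \<in> S"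
    and dk: "(k has_real_derivative k') (at z within S)"
  shows "((\<lambda>z'. F (x, k z', w)) has_real_derivative (DF (x,k z,w) (0,1,0) * k')) (at z within S)"
proof -
  have dg: "((\<lambda>z'. (x, k z', w)) has_derivative (\<lambda>t. (0, k' * t, 0))) (at z within S)"
    using dk unfolding has_field_derivative_def
    by (intro has_derivative_Pair has_derivative_ident has_derivative_const) auto
  have "((\<lambda>z'. F (x, k z', w)) has_derivative (\<lambda>t. DF (x,k z,w) (0, k' * t, 0))) (at z within S)"
    by (rule has_derivative_in_compose2[where t=K and g=F and g'="\<lambda>q. blinfun_apply (DF q)", OF _ _ z dg])
       (use dF img in auto)
  moreover have "(\<lambda>t. DF (x,k z,w) (0, k' * t, 0)) = (*) (DF (x,k z,w) (0,1,0) * k')"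
  proof
    fix t
    have "(0::real, k' * t, 0::real) = (k' * t) *\<^sub>R (0,1,0)" by simp
    then show "DF (x,k z,w) (0, k' * t, 0) = (DF (x,k z,w) (0,1,0) * k') * t"
      by (simp only: blinfun.scaleR_right) (simp add: algebra_simps)
  qed
  ultimately show ?thesis unfolding has_field_derivative_def by simp
qed

lemma C2_onD:
  assumes "C2_on K f Df"
  shows "\<forall>p\<in>K. (f has_derivative blinfun_apply (Df p)) (at p within K)"
    and "continuous_on K f" and "continuous_on K Df"
proof -
  show d: "\<forall>p\<in>K. (f has_derivative blinfun_apply (Df p)) (at p within K)"
    using assms unfolding C2_on_def by blast
  then show "continuous_on K f" by (intro has_derivative_continuous_on) auto
  from assms obtain D2f where "\<forall>p\<in>K. (Df has_derivative blinfun_apply (D2f p)) (at p within K)"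
    unfolding C2_on_def by blast
  then show "continuous_on K Df" by (intro has_derivative_continuous_on) auto
qed

lemma test_fnE:
  assumes "test_fn \<Omega> \<phi>"
  obtains \<phi>x \<phi>z where "\<And>p. (\<phi> has_derivative (\<lambda>v. fst v * \<phi>x p + snd v * \<phi>z p)) (at p)"
    "continuous_on UNIV \<phi>" "continuous_on UNIV \<phi>x" "continuous_on UNIV \<phi>z"
    "\<And>p. grad2 \<phi> p = (\<phi>x p, \<phi>z p)"
    "\<And>p. p \<notin> \<Omega> \<Longrightarrow> \<phi> p = 0 \<and> \<phi>x p = 0 \<and> \<phi>z p = 0"
proof -
  from assms obtain S where S: "\<phi> \<in> S" and Sd: "\<forall>g\<in>S. \<exists>g1\<in>S. \<exists>g2\<in>S. \<forall>p.
        (g has_derivative (\<lambda>v. fst v * g1 p + snd v * g2 p)) (at p)"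
    and supp: "closure {p. \<phi> p \<noteq> 0} \<subseteq> \<Omega>"
    unfolding test_fn_def smooth2_def by blast
  have cont: "continuous_on UNIV g" if "g \<in> S" for g
  proof -
    obtain g1 g2 where "\<forall>p. (g has_derivative (\<lambda>v. fst v * g1 p + snd v * g2 p)) (at p)"
      using Sd \<open>g \<in> S\<close> by blast
    then show ?thesis by (intro has_derivative_continuous_on) auto
  qed
  obtain \<phi>x \<phi>z where xz: "\<phi>x \<in> S" "\<phi>z \<in> S"
    and d: "\<And>p. (\<phi> has_derivative (\<lambda>v. fst v * \<phi>x p + snd v * \<phi>z p)) (at p)"
    using Sd S by blast
  have grad: "grad2 \<phi> p = (\<phi>x p, \<phi>z p)" for p
    by (simp add: grad2_def frechet_derivative_at[OF d[of p], symmetric])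
  have vanish: "\<phi> p = 0 \<and> \<phi>x p = 0 \<and> \<phi>z p = 0" if "p \<notin> \<Omega>" for p
  proof -
    let ?K = "closure {p. \<phi> p \<noteq> 0}"
    have pK: "p \<in> - ?K" using that supp by auto
    have zero: "\<phi> q = 0" if "q \<in> - ?K" for q using that closure_subset[of "{p. \<phi> p \<noteq> 0}"] by blast
    have "((\<lambda>_. 0::real) has_derivative (\<lambda>v. 0)) (at p)" by simp
    then have "(\<phi> has_derivative (\<lambda>v. 0)) (at p)"
    proof (rule has_derivative_transform_within_open[OF _ _ pK])
      show "open (- ?K)" by (rule open_Compl) (rule closed_closure)
      show "\<And>q. q \<in> - ?K \<Longrightarrow> 0 = \<phi> q" by (rule sym, rule zero)
    qed
    then have "(\<lambda>v. fst v * \<phi>x p + snd v * \<phi>z p) = (\<lambda>v. 0)"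
      by (rule has_derivative_unique[OF d[of p]])
    from fun_cong[OF this, of "(1,0)"] fun_cong[OF this, of "(0,1)"] zero[OF pK]
    show ?thesis by simp
  qed
  show ?thesis by (rule that[OF d cont[OF S] cont[OF xz(1)] cont[OF xz(2)] grad vanish])
qed

lemma DERIV_partial_fst:
  assumes "\<And>p. (\<phi> has_derivative (\<lambda>v. fst v * \<phi>x p + snd v * \<phi>z p)) (at p)"
  shows "((\<lambda>x'. \<phi> (x',z)) has_real_derivative \<phi>x (x,z)) (at x within S)"
proof -
  have "((\<lambda>x'. (x',z)) has_derivative (\<lambda>t. (t,0))) (at x within S)"
    by (intro has_derivative_Pair has_derivative_ident has_derivative_const)
  from has_derivative_compose[OF this assms]
  have "((\<lambda>x'. \<phi> (x',z)) has_derivative (\<lambda>t. t * \<phi>x (x,z))) (at x within S)" by simp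
  moreover have "(\<lambda>t. t * \<phi>x (x,z)) = (*) (\<phi>x (x,z))" by (auto simp: fun_eq_iff)
  ultimately show ?thesis unfolding has_field_derivative_def by simp
qed

lemma DERIV_partial_snd:
  assumes "\<And>p. (\<phi> has_derivative (\<lambda>v. fst v * \<phi>x p + snd v * \<phi>z p)) (at p)"
  shows "((\<lambda>z'. \<phi> (x,z')) has_real_derivative \<phi>z (x,z)) (at z within S)"
proof -
  have "((\<lambda>z'. (x,z')) has_derivative (\<lambda>t. (0,t))) (at z within S)"
    by (intro has_derivative_Pair has_derivative_ident has_derivative_const)
  from has_derivative_compose[OF this assms]
  have "((\<lambda>z'. \<phi> (x,z')) has_derivative (\<lambda>t. t * \<phi>z (x,z))) (at z within S)" by simp
  moreover have "(\<lambda>t. t * \<phi>z (x,z)) = (*) (\<phi>z (x,z))" by (auto simp: fun_eq_iff)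
  ultimately show ?thesis unfolding has_field_derivative_def by simp
qed

lemma grad2_const_zero: "grad2 (\<lambda>p. 0) p = 0"
  using frechet_derivative_at[OF has_derivative_const[of "0::real" "at p"]]
  by (simp add: grad2_def zero_prod_def)

lemma test_fn_zero: "test_fn \<Omega> (\<lambda>p. 0)"
proof -
  have "smooth2 (\<lambda>p. 0)" unfolding smooth2_def by (rule exI[of _ "{\<lambda>p. 0}"]) auto
  then show ?thesis unfolding test_fn_def by simp
qed

lemma H10_on_zero: "H10_on \<Omega> (\<lambda>p. 0)"
proof -
  have "(\<lambda>p. 0::real) measurable_on \<Omega>" "(\<lambda>p. 0::real\<times>real) measurable_on \<Omega>"
    using measurable_on_UNIV[where S=\<Omega>] by (simp_all add: measurable_on_const)
  then have "H1_on \<Omega> (\<lambda>p. 0) (\<lambda>p. 0)"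
    unfolding H1_on_def L2_on_def weak_grad_def by (simp add: integrable_0)
  then show ?thesis unfolding H10_on_def
    by (intro exI[of _ "\<lambda>p. 0"] conjI exI[of _ "\<lambda>n p. 0"]) (simp_all add: test_fn_zero grad2_const_zero)
qed

lemma power2_le_of_abs_le_sqrt: "\<bar>a::real\<bar> \<le> sqrt s \<Longrightarrow> 0 \<le> s \<Longrightarrow> a\<^sup>2 \<le> s"
  by (metis real_sqrt_abs real_sqrt_le_iff)

lemma chain_rule_square_bound:
  fixes gx gz gw v T W :: real
  assumes T: "(\<bar>gx\<bar> + \<bar>gz\<bar>)\<^sup>2 \<le> T" and W: "gw\<^sup>2 \<le> W"
  shows "(gx + gw * v)\<^sup>2 + gz\<^sup>2 \<le> 2 * T + 2 * W * v\<^sup>2"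
proof -
  have "(gx + gw * v)\<^sup>2 \<le> 2 * gx\<^sup>2 + 2 * (gw\<^sup>2 * v\<^sup>2)"
    using sum_squares_ge_zero[of "gx - gw * v" 0] by (simp add: power2_eq_square algebra_simps)
  moreover have "gx\<^sup>2 + gz\<^sup>2 \<le> (\<bar>gx\<bar> + \<bar>gz\<bar>)\<^sup>2"
    by (simp add: power2_eq_square algebra_simps)
  moreover have "gw\<^sup>2 * v\<^sup>2 \<le> W * v\<^sup>2" by (rule mult_right_mono[OF W]) simp
  moreover have "2 * W * v\<^sup>2 = 2 * (W * v\<^sup>2)" by simp
  ultimately show ?thesis using T zero_le_power2[of gz] by linarith
qed

lemma stretched_square_le:
  fixes gx gz s S \<delta> :: real
  assumes "0 < \<delta>" "\<delta> \<le> 1" "0 \<le> s" "gx\<^sup>2 + gz\<^sup>2 \<le> S"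
  shows "\<delta> * s * (gx\<^sup>2 + (gz / \<delta>)\<^sup>2) \<le> s * S / \<delta>"
proof -
  have "\<delta>\<^sup>2 * gx\<^sup>2 \<le> gx\<^sup>2" using assms(1,2) by (simp add: mult_left_le_one_le power_le_one)
  then have "\<delta>\<^sup>2 * gx\<^sup>2 + gz\<^sup>2 \<le> S" using assms(4) by linarith
  then have "s * (\<delta>\<^sup>2 * gx\<^sup>2 + gz\<^sup>2) / \<delta> \<le> s * S / \<delta>"
    using assms(1,3) by (intro divide_right_mono mult_left_mono) auto
  moreover have "\<delta> * s * (gx\<^sup>2 + (gz / \<delta>)\<^sup>2) = s * (\<delta>\<^sup>2 * gx\<^sup>2 + gz\<^sup>2) / \<delta>"
    using assms(1) by (simp add: power2_eq_square field_simps)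
  ultimately show ?thesis by simp
qed

lemma one_plus_square_le_growth:
  fixes H w :: real
  assumes H: "H > 0" and w: "1 \<le> H + w"
  shows "1 + w\<^sup>2 \<le> (H + w) * (1 + H + H\<^sup>2 + \<bar>w\<bar>)"
proof -
  define t where "t = H + w"
  have t1: "1 \<le> t" using w by (simp add: t_def)
  have "t * (1 + H + H\<^sup>2 + w) \<le> (H + w) * (1 + H + H\<^sup>2 + \<bar>w\<bar>)"
    using t1 by (auto simp: t_def intro!: mult_left_mono)
  moreover have "t * (1 + H + H\<^sup>2 + w) - (1 + w\<^sup>2) = (t - 1) + H\<^sup>2 * (t - 1) + 2 * t * H"
    by (simp add: t_def power2_eq_square algebra_simps)
  moreover have "0 \<le> (t - 1) + H\<^sup>2 * (t - 1) + 2 * t * H" using t1 H by auto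
  ultimately show ?thesis by linarith
qed

lemma abs_blinfun_unit_le:
  fixes D :: "(real\<times>real\<times>real) \<Rightarrow>\<^sub>L real"
  assumes "norm D \<le> B"
  shows "\<bar>D (1,0,0)\<bar> \<le> B" "\<bar>D (0,1,0)\<bar> \<le> B" "\<bar>D (0,0,1)\<bar> \<le> B"
  using norm_blinfun[of D "(1,0,0)"] norm_blinfun[of D "(0,1,0)"] norm_blinfun[of D "(0,0,1)"] assms
  by (simp_all add: norm_Pair)

lemma abs_le_young: "0 < e \<Longrightarrow> \<bar>t::real\<bar> \<le> e * t\<^sup>2 + 1 / (4 * e)"
proof -
  assume e: "0 < e"
  have "4 * e * \<bar>t\<bar> \<le> 4 * e * e * t\<^sup>2 + 1"
    using sum_squares_ge_zero[of "2 * e * \<bar>t\<bar> - 1" 0] by (simp add: power2_eq_square algebra_simps)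
  then have "4 * e * \<bar>t\<bar> \<le> 4 * e * (e * t\<^sup>2 + 1 / (4 * e))" using e by (simp add: algebra_simps)
  then show ?thesis using e by simp
qed

lemma substituted_quadratic_le:
  fixes A B C D E e k X c :: real
  assumes "0 \<le> A" "0 \<le> B" "0 < e" "e \<le> 1" "e * (A + B) \<le> c"
  shows "A * (e * X + k)\<^sup>2 + B * (e * X + k) * X + C * (e * X + k) + D * X + E
    \<le> c * X\<^sup>2 + (2 * A * e * k + B * k + C * e + D) * X + (A * k\<^sup>2 + C * k + E)"
proof -
  have "A * e\<^sup>2 \<le> A * e" using assms by (simp add: mult_left_mono power2_eq_square mult_le_cancel_left1)
  then have "A * e\<^sup>2 + B * e \<le> c" using assms(5) by (simp add: algebra_simps)
  then have "(A * e\<^sup>2 + B * e) * X\<^sup>2 \<le> c * X\<^sup>2" by (rule mult_right_mono) simp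
  moreover have "A * (e * X + k)\<^sup>2 + B * (e * X + k) * X + C * (e * X + k) + D * X + E
    = (A * e\<^sup>2 + B * e) * X\<^sup>2 + (2 * A * e * k + B * k + C * e + D) * X + (A * k\<^sup>2 + C * k + E)"
    by (simp add: power2_eq_square algebra_simps)
  ultimately show ?thesis by simp
qed
lemma quadratic_absorption:
  fixes a \<tau> X I k1 k0 :: real
  assumes a: "0 < a" and "0 \<le> \<tau>" "0 \<le> X" and I: "I \<le> a / 4 * X\<^sup>2 + k1 * X + k0"
  shows "a / 4 * X \<le> (\<tau> / 2 + a / 4 * X) * X - 1 / 2 * I + (k0 / 2 + 2 * (a / 4 + k1 / 2)\<^sup>2 / a)"
proof -
  define b where "b = a / 4 + k1 / 2"
  have "0 \<le> a / 8 * (X - 4 * b / a)\<^sup>2" using a by simp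
  also have "a / 8 * (X - 4 * b / a)\<^sup>2 = a / 8 * X\<^sup>2 - b * X + 2 * b\<^sup>2 / a"
    using a by (simp add: power2_eq_square field_simps)
  finally have "b * X \<le> a / 8 * X\<^sup>2 + 2 * b\<^sup>2 / a" by simp
  moreover have "0 \<le> \<tau> / 2 * X" using assms by simp
  moreover have "(\<tau> / 2 + a / 4 * X) * X = \<tau> / 2 * X + a / 4 * X\<^sup>2" by (simp add: power2_eq_square algebra_simps)
  moreover have "k1 * X = 2 * (b * X) - a / 2 * X" by (simp add: b_def algebra_simps)
  ultimately show ?thesis using I unfolding b_def[symmetric] by linarith
qed

lemma norm_le_one_plus_Sup:
  fixes f :: "'a::topological_space \<Rightarrow> 'b::real_normed_vector"
  assumes K: "compact K" and f: "continuous_on K f" and p: "p \<in> K"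
  shows "norm (f p) \<le> 1 + Sup ((\<lambda>q. norm (f q)) ` K)" and "1 \<le> 1 + Sup ((\<lambda>q. norm (f q)) ` K)"
proof -
  have "compact ((\<lambda>q. norm (f q)) ` K)"
    by (intro compact_continuous_image continuous_intros f K)
  then have bdd: "bdd_above ((\<lambda>q. norm (f q)) ` K)" by (meson bounded_imp_bdd_above compact_imp_bounded)
  have "norm (f p) \<le> Sup ((\<lambda>q. norm (f q)) ` K)" using cSUP_upper[OF p bdd] .
  then show "norm (f p) \<le> 1 + Sup ((\<lambda>q. norm (f q)) ` K)" "1 \<le> 1 + Sup ((\<lambda>q. norm (f q)) ` K)"
    using norm_ge_zero[of "f p"] by linarith+
qed

section \<open>The boundary datum as a competitor\<close>

locale two_layer_data =
  fixes L H m :: real and \<sigma> :: "real\<times>real \<Rightarrow> real"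
    and hb h :: "real\<times>real\<times>real \<Rightarrow> real"
    and Dhb Dh :: "real\<times>real\<times>real \<Rightarrow> (real\<times>real\<times>real) \<Rightarrow>\<^sub>L real"
  assumes L_pos: "L > 0" and H_pos: "H > 0" and m_pos: "m > 0"
    and sigma_cont: "continuous_on ({-L..L} \<times> {-H-1..-H}) \<sigma>"
    and sigma_pos: "\<forall>p \<in> {-L..L} \<times> {-H-1..-H}. \<sigma> p > 0"
    and hb_C2: "C2_on ({-L..L} \<times> {-H-1..-H} \<times> {-H..}) hb Dhb"
    and h_C2: "C2_on ({-L..L} \<times> {-H..} \<times> {-H..}) h Dh"
    and interface_val: "\<forall>x\<in>{-L..L}. \<forall>w\<ge>-H. hb (x, -H, w) = h (x, -H, w)"
    and hb_bound1: "\<forall>x\<in>{-L..L}. \<forall>z\<in>{-H-1..-H}. \<forall>w\<ge>-H.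
          \<bar>Dhb (x, z, w) (1, 0, 0)\<bar> + \<bar>Dhb (x, z, w) (0, 1, 0)\<bar> \<le> sqrt (m * (1 + w\<^sup>2))"
    and hb_bound2: "\<forall>x\<in>{-L..L}. \<forall>z\<in>{-H-1..-H}. \<forall>w\<ge>-H.
          \<bar>Dhb (x, z, w) (0, 0, 1)\<bar> \<le> sqrt m"
    and h_bound1: "\<forall>x\<in>{-L..L}. \<forall>z\<ge>-H. \<forall>w>-H.
          \<bar>Dh (x, z, w) (1, 0, 0)\<bar> + \<bar>Dh (x, z, w) (0, 1, 0)\<bar> \<le> sqrt (m * (1 + w\<^sup>2) / (H + w))"
    and h_bound2: "\<forall>x\<in>{-L..L}. \<forall>z\<ge>-H. \<forall>w>-H.
          \<bar>Dh (x, z, w) (0, 0, 1)\<bar> \<le> sqrt (m / (H + w))"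
begin

abbreviation "hb_domain \<equiv> {-L..L} \<times> {-H-1..-H} \<times> {-H..}"
abbreviation "h_domain \<equiv> {-L..L} \<times> {-H..} \<times> {-H..}"
abbreviation "sigma_domain \<equiv> {-L..L} \<times> {-H-1..-H}"

text \<open>The growth bounds on Dh degenerate as the film height w approaches -H; there Dh is
  instead controlled by its supremum over the compact block below.\<close>
abbreviation "bottom_block \<equiv> {-L..L} \<times> {-H..-H+1} \<times> {-H..-H+1}"

lemma hb_deriv: "\<forall>p\<in>hb_domain. (hb has_derivative blinfun_apply (Dhb p)) (at p within hb_domain)"
  and hb_cont: "continuous_on hb_domain hb" and Dhb_cont: "continuous_on hb_domain Dhb"
  using C2_onD[OF hb_C2] by auto

lemma h_deriv: "\<forall>p\<in>h_domain. (h has_derivative blinfun_apply (Dh p)) (at p within h_domain)"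
  and h_cont: "continuous_on h_domain h" and Dh_cont: "continuous_on h_domain Dh"
  using C2_onD[OF h_C2] by auto

definition "sigma_sup = 1 + Sup ((\<lambda>p. norm (\<sigma> p)) ` sigma_domain)"
definition "Dh_sup = 1 + Sup ((\<lambda>q. norm (Dh q)) ` bottom_block)"

lemma sigma_le_sigma_sup: "p \<in> sigma_domain \<Longrightarrow> \<sigma> p \<le> sigma_sup"
  using norm_le_one_plus_Sup(1)[OF compact_Times[OF compact_Icc compact_Icc] sigma_cont, of p]
  by (simp add: sigma_sup_def)

lemma one_le_sigma_sup: "1 \<le> sigma_sup"
  using norm_le_one_plus_Sup(2)[OF compact_Times[OF compact_Icc compact_Icc] sigma_cont, of "(-L, -H)"] L_pos
  by (simp add: sigma_sup_def)

lemma compact_bottom_block: "compact bottom_block"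
  by (intro compact_Times compact_Icc)

lemma Dh_cont_bottom_block: "continuous_on bottom_block Dh"
  by (rule continuous_on_subset[OF Dh_cont]) auto

lemma norm_Dh_le_Dh_sup: "q \<in> bottom_block \<Longrightarrow> norm (Dh q) \<le> Dh_sup"
  unfolding Dh_sup_def by (rule norm_le_one_plus_Sup(1)[OF compact_bottom_block Dh_cont_bottom_block])

end

locale graph_profile = two_layer_data +
  fixes u u1 u2 :: "real \<Rightarrow> real" and \<delta> :: real
  assumes profile: "barS0 L H u u1 u2" and delta_pos: "0 < \<delta>" and delta_lt_1: "\<delta> < 1"
begin

lemma u_deriv: "\<forall>x\<in>{-L..L}. (u has_real_derivative u1 x) (at x within {-L..L})"
  and u_ge: "\<forall>x\<in>{-L..L}. u x \<ge> -H"
  and u_ends: "u (-L) = 0" "u L = 0"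
  and u1_eq_integral: "\<forall>x\<in>{-L..L}. u1 x = u1 (-L) + integral {-L..x} u2"
  and u2_L2: "L2_on {-L..L} u2"
  using profile unfolding barS0_def H2_repr_def by auto

lemma u_cont: "continuous_on {-L..L} u"
  using u_deriv by (intro has_derivative_continuous_on) (auto simp: has_field_derivative_def)

lemma u2_integrable: "u2 integrable_on {-L..L}"
proof -
  have L: "{-L..L} \<in> sets lebesgue" by simp
  have "u2 \<in> borel_measurable (lebesgue_on {-L..L})"
    using u2_L2 measurable_on_iff_borel_measurable[OF L] unfolding L2_on_def by blast
  moreover have "(\<lambda>x. (1 + (norm (u2 x))\<^sup>2) / 2) integrable_on {-L..L}"
  proof -
    have "(\<lambda>x. 1 + (norm (u2 x))\<^sup>2) integrable_on {-L..L}"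
      using u2_L2 unfolding L2_on_def by (intro integrable_add integrable_on_const) auto
    then show ?thesis by simp
  qed
  moreover have "norm (u2 x) \<le> (1 + (norm (u2 x))\<^sup>2) / 2" for x
  proof -
    have "0 \<le> (1 - norm (u2 x))\<^sup>2" by simp
    then show ?thesis unfolding power2_diff by simp
  qed
  ultimately show ?thesis using measurable_bounded_by_integrable_imp_integrable L by blast
qed

lemma u1_cont: "continuous_on {-L..L} u1"
proof -
  have "continuous_on {-L..L} (\<lambda>x. u1 (-L) + integral {-L..x} u2)"
    by (intro continuous_intros indefinite_integral_continuous_1 u2_integrable)
  then show ?thesis using u1_eq_integral continuous_on_eq by (metis (no_types, lifting))
qed

abbreviation "slope_energy \<equiv> integral {-L..L} (\<lambda>x. (u1 x)\<^sup>2)"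

lemma integral_affine_u1_square:
  "(\<lambda>x. c + d * (u1 x)\<^sup>2) integrable_on {-L..L}"
  "integral {-L..L} (\<lambda>x. c + d * (u1 x)\<^sup>2) = c * (2 * L) + d * slope_energy"
proof -
  show "(\<lambda>x. c + d * (u1 x)\<^sup>2) integrable_on {-L..L}"
    by (intro integrable_continuous_real continuous_intros u1_cont)
  have "integral {-L..L} (\<lambda>x. c + d * (u1 x)\<^sup>2) = integral {-L..L} (\<lambda>x. c) + integral {-L..L} (\<lambda>x. d * (u1 x)\<^sup>2)"
    by (rule integral_add) (auto intro!: integrable_continuous_real continuous_intros u1_cont)
  then show "integral {-L..L} (\<lambda>x. c + d * (u1 x)\<^sup>2) = c * (2 * L) + d * slope_energy"
    using L_pos by (simp add: content_real)
qed

lemma slope_energy_nonneg: "0 \<le> slope_energy"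
  by (rule integral_nonneg) (auto intro: integrable_continuous_real continuous_intros u1_cont)

lemma u_eq_integral_u1: "x \<in> {-L..L} \<Longrightarrow> u x = integral {-L..x} u1"
proof -
  assume x: "x \<in> {-L..L}"
  have "(u1 has_integral (u x - u (-L))) {-L..x}"
  proof (rule fundamental_theorem_of_calculus)
    show "-L \<le> x" using x by simp
    fix t assume "t \<in> {-L..x}"
    then have "(u has_real_derivative u1 t) (at t within {-L..L})" using u_deriv x by auto
    then have "(u has_real_derivative u1 t) (at t within {-L..x})"
      by (rule DERIV_subset) (use x in auto)
    then show "(u has_vector_derivative u1 t) (at t within {-L..x})"
      by (simp add: has_real_derivative_iff_has_vector_derivative)
  qed
  then show ?thesis using u_ends by (simp add: integral_unique)
qed

definition "height_bound M \<longleftrightarrow> 0 \<le> M \<and> (\<forall>x\<in>{-L..L}. \<bar>u x\<bar> \<le> M)"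

lemma height_bound_young:
  assumes e: "0 < e"
  shows "height_bound (e * slope_energy + L / (2 * e))"
  unfolding height_bound_def
proof
  show "0 \<le> e * slope_energy + L / (2 * e)" using e slope_energy_nonneg L_pos by simp
  show "\<forall>x\<in>{-L..L}. \<bar>u x\<bar> \<le> e * slope_energy + L / (2 * e)"
  proof
    fix x assume x: "x \<in> {-L..L}"
    have sub: "{-L..x} \<subseteq> {-L..L}" using x by auto
    have ci: "continuous_on {-L..x} u1" by (rule continuous_on_subset[OF u1_cont sub])
    have gi: "(\<lambda>t. 1 / (4 * e) + e * (u1 t)\<^sup>2) integrable_on {-L..x}"
      by (intro integrable_continuous_real continuous_intros ci)
    have "\<bar>u x\<bar> = norm (integral {-L..x} u1)" using u_eq_integral_u1[OF x] by simp
    also have "\<dots> \<le> integral {-L..x} (\<lambda>t. 1 / (4 * e) + e * (u1 t)\<^sup>2)"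
      by (rule integral_norm_bound_integral[OF integrable_continuous_real[OF ci] gi])
         (use abs_le_young[OF e] in \<open>simp add: add.commute\<close>)
    also have "\<dots> \<le> integral {-L..L} (\<lambda>t. 1 / (4 * e) + e * (u1 t)\<^sup>2)"
      by (rule integral_subset_le[OF sub gi integral_affine_u1_square(1)]) (use e in simp)
    also have "\<dots> = e * slope_energy + L / (2 * e)"
      unfolding integral_affine_u1_square(2) using e by (simp add: field_simps)
    finally show "\<bar>u x\<bar> \<le> e * slope_energy + L / (2 * e)" .
  qed
qed

lemma height_bound_exists: "\<exists>M. height_bound M"
  using height_bound_young[of 1] by auto

lemma height_bound_ge: "height_bound M \<Longrightarrow> -H \<le> M"
  using H_pos unfolding height_bound_def by auto

definition "stretch z = -H + (z + H) / \<delta>"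
definition "lift_lower p = (fst p, stretch (snd p), u (fst p))"
definition "lift_upper p = (fst p, snd p, u (fst p))"
definition "h_lower p = hb (lift_lower p)"
definition "h_upper p = h (lift_upper p)"
definition "grad_lower p = (Dhb (lift_lower p) (1,0,0) + Dhb (lift_lower p) (0,0,1) * u1 (fst p),
    Dhb (lift_lower p) (0,1,0) / \<delta>)"
definition "grad_upper p = (Dh (lift_upper p) (1,0,0) + Dh (lift_upper p) (0,0,1) * u1 (fst p),
    Dh (lift_upper p) (0,1,0))"
definition "grad_h p = (if snd p < -H then grad_lower p else grad_upper p)"

abbreviation "Om \<equiv> Omega_d L H \<delta> u"
abbreviation "strip \<equiv> cbox (-L, -H-\<delta>) (L, -H)"
abbreviation "upper_box M \<equiv> cbox (-L, -H) (L, M)"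

lemma h_ud_eq: "h_ud H \<delta> hb h u p = (if snd p < -H then h_lower p else h_upper p)"
  by (cases p) (simp add: h_ud_def h_lower_def h_upper_def lift_lower_def lift_upper_def stretch_def)

lemma stretch_mem: "z \<in> {-H-\<delta>..-H} \<Longrightarrow> stretch z \<in> {-H-1..-H}"
  using delta_pos by (auto simp: stretch_def field_simps divide_nonpos_pos)

lemma lift_lower_mem: "p \<in> strip \<Longrightarrow> lift_lower p \<in> hb_domain"
  using stretch_mem u_ge by (cases p) (auto simp: lift_lower_def cbox_Pair_iff)

lemma lift_upper_mem: "fst p \<in> {-L..L} \<Longrightarrow> -H \<le> snd p \<Longrightarrow> lift_upper p \<in> h_domain"
  using u_ge by (cases p) (auto simp: lift_upper_def)

lemma continuous_on_cbox_fst: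
  "continuous_on {-L..L} f \<Longrightarrow> continuous_on (cbox (-L, a) (L, b)) (\<lambda>p. f (fst p))"
  by (rule continuous_on_compose2[of "{-L..L}" f]) (auto intro!: continuous_intros simp: cbox_Pair_iff)

lemma lift_lower_cont: "continuous_on strip lift_lower"
  unfolding lift_lower_def stretch_def using delta_pos
  by (intro continuous_intros continuous_on_cbox_fst u_cont) auto

lemma lift_upper_cont: "continuous_on (upper_box M) lift_upper"
  unfolding lift_upper_def by (intro continuous_intros continuous_on_cbox_fst u_cont)

lemma lift_lower_image: "lift_lower ` strip \<subseteq> hb_domain"
  using lift_lower_mem by blast

lemma lift_upper_image: "lift_upper ` upper_box M \<subseteq> h_domain"
  using lift_upper_mem by (force simp: cbox_Pair_iff)

lemma h_lower_cont: "continuous_on strip h_lower"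
  unfolding h_lower_def by (rule continuous_on_compose2[OF hb_cont lift_lower_cont lift_lower_image])

lemma h_upper_cont: "continuous_on (upper_box M) h_upper"
  unfolding h_upper_def by (rule continuous_on_compose2[OF h_cont lift_upper_cont lift_upper_image])

lemma grad_lower_cont: "continuous_on strip grad_lower"
proof -
  have "continuous_on strip (\<lambda>p. Dhb (lift_lower p))"
    by (rule continuous_on_compose2[OF Dhb_cont lift_lower_cont lift_lower_image])
  then show ?thesis unfolding grad_lower_def using delta_pos
    by (intro continuous_intros blinfun.continuous_on continuous_on_cbox_fst u1_cont) auto
qed

lemma grad_upper_cont: "continuous_on (upper_box M) grad_upper"
proof -
  have "continuous_on (upper_box M) (\<lambda>p. Dh (lift_upper p))"
    by (rule continuous_on_compose2[OF Dh_cont lift_upper_cont lift_upper_image])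
  then show ?thesis unfolding grad_upper_def
    by (intro continuous_intros blinfun.continuous_on continuous_on_cbox_fst u1_cont)
qed

lemma Om_open: "open Om"
proof -
  let ?S = "{-L<..<L} \<times> (UNIV::real set)"
  have "continuous_on ?S (\<lambda>p. u (fst p) - snd p)"
    by (intro continuous_intros continuous_on_compose2[OF u_cont]) auto
  moreover have "open ?S" by (intro open_Times) auto
  ultimately have "open ((\<lambda>p. u (fst p) - snd p) -` {0<..} \<inter> ?S)"
    using continuous_on_open_vimage open_greaterThan by blast
  moreover have "Om = ((\<lambda>p. u (fst p) - snd p) -` {0<..} \<inter> ?S) \<inter> {p. -H-\<delta> < snd p}"
    by (auto simp: Omega_d_def)
  ultimately show ?thesis by (auto intro!: open_Int open_Collect_less continuous_intros)
qed

lemma Om_lower_in_strip: "p \<in> Om \<Longrightarrow> snd p < -H \<Longrightarrow> p \<in> strip"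
  unfolding Omega_d_def by (auto simp: cbox_Pair_iff)

lemma Om_upper_in_box:
  assumes M: "height_bound M" and p: "p \<in> Om" and z: "-H \<le> snd p"
  shows "p \<in> upper_box M"
proof -
  obtain x z where pe: "p = (x,z)" by (cases p)
  have x: "-L < x" "x < L" "z < u x" using p pe by (auto simp: Omega_d_def)
  have "\<bar>u x\<bar> \<le> M" using M x unfolding height_bound_def by auto
  then show ?thesis using x z pe by (auto simp: cbox_Pair_iff)
qed

lemma Om_subset_boxes: "height_bound M \<Longrightarrow> Om \<subseteq> strip \<union> upper_box M"
  using Om_lower_in_strip Om_upper_in_box by (meson UnI1 UnI2 not_le subsetI)

lemma Om_bounded: "bounded Om"
  using height_bound_exists Om_subset_boxes by (metis bounded_Un bounded_cbox bounded_subset)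

lemma Om_lmeasurable: "Om \<in> lmeasurable"
  by (rule lmeasurable_open[OF Om_bounded Om_open])

lemma not_in_Om:
  "(L, z) \<notin> Om" "(-L, z) \<notin> Om" "(x, -H-\<delta>) \<notin> Om" "height_bound M \<Longrightarrow> x \<in> {-L..L} \<Longrightarrow> (x, M) \<notin> Om"
  unfolding Omega_d_def height_bound_def by (auto dest!: bspec[of _ _ x])

lemma h_lower_DERIV_fst: "x \<in> {-L..L} \<Longrightarrow> z \<in> {-H-\<delta>..-H} \<Longrightarrow>
   ((\<lambda>x'. h_lower (x',z)) has_real_derivative fst (grad_lower (x,z))) (at x within {-L..L})"
  unfolding h_lower_def lift_lower_def grad_lower_def fst_conv snd_conv
  by (rule DERIV_comp3_graph[OF hb_deriv]) (use stretch_mem u_ge u_deriv in auto)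

lemma h_upper_DERIV_fst: "x \<in> {-L..L} \<Longrightarrow> -H \<le> z \<Longrightarrow>
   ((\<lambda>x'. h_upper (x',z)) has_real_derivative fst (grad_upper (x,z))) (at x within {-L..L})"
  unfolding h_upper_def lift_upper_def grad_upper_def fst_conv snd_conv
  by (rule DERIV_comp3_graph[OF h_deriv]) (use u_ge u_deriv in auto)

lemma h_lower_DERIV_snd: "x \<in> {-L..L} \<Longrightarrow> z \<in> {-H-\<delta>..-H} \<Longrightarrow>
   ((\<lambda>z'. h_lower (x,z')) has_real_derivative snd (grad_lower (x,z))) (at z within {-H-\<delta>..-H})"
proof -
  assume x: "x \<in> {-L..L}" and z: "z \<in> {-H-\<delta>..-H}"
  have ds: "(stretch has_real_derivative 1 / \<delta>) (at z within {-H-\<delta>..-H})"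
    unfolding stretch_def using delta_pos by (auto intro!: derivative_eq_intros)
  have "((\<lambda>z'. hb (x, stretch z', u x)) has_real_derivative Dhb (x, stretch z, u x) (0,1,0) * (1 / \<delta>))
      (at z within {-H-\<delta>..-H})"
    by (rule DERIV_comp3_snd[OF hb_deriv _ z ds]) (use stretch_mem u_ge x in auto)
  then show ?thesis unfolding h_lower_def lift_lower_def grad_lower_def by simp
qed

lemma h_upper_DERIV_snd: "x \<in> {-L..L} \<Longrightarrow> z \<in> {-H..M} \<Longrightarrow>
   ((\<lambda>z'. h_upper (x,z')) has_real_derivative snd (grad_upper (x,z))) (at z within {-H..M})"
proof -
  assume x: "x \<in> {-L..L}" and z: "z \<in> {-H..M}"
  have "((\<lambda>z'. h (x, (\<lambda>t. t) z', u x)) has_real_derivative Dh (x, (\<lambda>t. t) z, u x) (0,1,0) * 1)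
      (at z within {-H..M})"
    by (rule DERIV_comp3_snd[OF h_deriv _ z]) (use u_ge x in \<open>auto intro!: derivative_eq_intros\<close>)
  then show ?thesis unfolding h_upper_def lift_upper_def grad_upper_def by simp
qed

lemma h_lower_eq_h_upper_interface: "x \<in> {-L..L} \<Longrightarrow> h_lower (x,-H) = h_upper (x,-H)"
  using interface_val u_ge by (simp add: h_lower_def h_upper_def lift_lower_def lift_upper_def stretch_def)

lemma integral_Om_by_parts:
  fixes f f1 f2 g g1 g2 \<phi> \<psi> :: "real\<times>real \<Rightarrow> real"
  assumes M: "height_bound M"
    and f: "\<And>p. snd p < -H \<Longrightarrow> f p = f1 p" "\<And>p. -H \<le> snd p \<Longrightarrow> f p = f2 p"
    and g: "\<And>p. snd p < -H \<Longrightarrow> g p = g1 p" "\<And>p. -H \<le> snd p \<Longrightarrow> g p = g2 p"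
    and cf: "continuous_on strip f1" "continuous_on (upper_box M) f2"
    and cg: "continuous_on strip g1" "continuous_on (upper_box M) g2"
    and c\<phi>: "continuous_on UNIV \<phi>" and c\<psi>: "continuous_on UNIV \<psi>"
    and vanish: "\<And>p. p \<notin> Om \<Longrightarrow> \<phi> p = 0 \<and> \<psi> p = 0"
    and boxes: "integral strip (\<lambda>p. f1 p * \<psi> p + g1 p * \<phi> p)
        + integral (upper_box M) (\<lambda>p. f2 p * \<psi> p + g2 p * \<phi> p) = 0"
  shows "integral Om (\<lambda>p. f p * \<psi> p) = - integral Om (\<lambda>p. g p * \<phi> p)"
proof -
  have c: "continuous_on S \<phi>" "continuous_on S \<psi>" for S
    using continuous_on_subset[OF c\<phi>] continuous_on_subset[OF c\<psi>] by blast+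
  have If: "((\<lambda>p. f p * \<psi> p) has_integral
      (integral strip (\<lambda>p. f1 p * \<psi> p) + integral (upper_box M) (\<lambda>p. f2 p * \<psi> p))) Om"
    by (rule has_integral_stacked_boxes[OF Om_subset_boxes[OF M]])
       (use vanish f in \<open>auto intro!: continuous_intros cf c\<close>)
  have Ig: "((\<lambda>p. g p * \<phi> p) has_integral
      (integral strip (\<lambda>p. g1 p * \<phi> p) + integral (upper_box M) (\<lambda>p. g2 p * \<phi> p))) Om"
    by (rule has_integral_stacked_boxes[OF Om_subset_boxes[OF M]])
       (use vanish g in \<open>auto intro!: continuous_intros cg c\<close>)
  have "integral strip (\<lambda>p. f1 p * \<psi> p + g1 p * \<phi> p)
      = integral strip (\<lambda>p. f1 p * \<psi> p) + integral strip (\<lambda>p. g1 p * \<phi> p)"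
    by (intro integral_add integrable_continuous continuous_intros cf cg c)
  moreover have "integral (upper_box M) (\<lambda>p. f2 p * \<psi> p + g2 p * \<phi> p)
      = integral (upper_box M) (\<lambda>p. f2 p * \<psi> p) + integral (upper_box M) (\<lambda>p. g2 p * \<phi> p)"
    by (intro integral_add integrable_continuous continuous_intros cf cg c)
  ultimately show ?thesis using boxes integral_unique[OF If] integral_unique[OF Ig] by simp
qed

lemma weak_deriv_fst:
  assumes "test_fn Om \<phi>"
  shows "integral Om (\<lambda>p. h_ud H \<delta> hb h u p * fst (grad2 \<phi> p)) = - integral Om (\<lambda>p. fst (grad_h p) * \<phi> p)"
proof -
  obtain M where M: "height_bound M" using height_bound_exists by blast
  obtain \<phi>x \<phi>z where d: "\<And>p. (\<phi> has_derivative (\<lambda>v. fst v * \<phi>x p + snd v * \<phi>z p)) (at p)"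
    and c\<phi>: "continuous_on UNIV \<phi>" and cx: "continuous_on UNIV \<phi>x"
    and grad: "\<And>p. grad2 \<phi> p = (\<phi>x p, \<phi>z p)"
    and vanish: "\<And>p. p \<notin> Om \<Longrightarrow> \<phi> p = 0 \<and> \<phi>x p = 0 \<and> \<phi>z p = 0"
    by (rule test_fnE[OF assms]) blast
  have c: "continuous_on S \<phi>" "continuous_on S \<phi>x" for S
    using continuous_on_subset[OF c\<phi>] continuous_on_subset[OF cx] by blast+
  have lower: "integral strip (\<lambda>p. h_lower p * \<phi>x p + fst (grad_lower p) * \<phi> p) = 0"
  proof -
    have "integral strip (\<lambda>p. h_lower p * \<phi>x p + fst (grad_lower p) * \<phi> p)
        = integral {-H-\<delta>..-H} (\<lambda>z. h_lower (L,z) * \<phi> (L,z) - h_lower (-L,z) * \<phi> (-L,z))"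
    proof (rule integral_cbox_deriv_fst[where Q = "\<lambda>p. h_lower p * \<phi> p"])
      show "continuous_on strip (\<lambda>p. h_lower p * \<phi>x p + fst (grad_lower p) * \<phi> p)"
        by (intro continuous_intros h_lower_cont grad_lower_cont c)
    qed (use L_pos DERIV_mult'[OF h_lower_DERIV_fst DERIV_partial_fst[OF d]] in auto)
    then show ?thesis using vanish not_in_Om by simp
  qed
  have upper: "integral (upper_box M) (\<lambda>p. h_upper p * \<phi>x p + fst (grad_upper p) * \<phi> p) = 0"
  proof -
    have "integral (upper_box M) (\<lambda>p. h_upper p * \<phi>x p + fst (grad_upper p) * \<phi> p)
        = integral {-H..M} (\<lambda>z. h_upper (L,z) * \<phi> (L,z) - h_upper (-L,z) * \<phi> (-L,z))"
    proof (rule integral_cbox_deriv_fst[where Q = "\<lambda>p. h_upper p * \<phi> p"])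
      show "continuous_on (upper_box M) (\<lambda>p. h_upper p * \<phi>x p + fst (grad_upper p) * \<phi> p)"
        by (intro continuous_intros h_upper_cont grad_upper_cont c)
    qed (use L_pos DERIV_mult'[OF h_upper_DERIV_fst DERIV_partial_fst[OF d]] in auto)
    then show ?thesis using vanish not_in_Om by simp
  qed
  have "integral Om (\<lambda>p. h_ud H \<delta> hb h u p * \<phi>x p) = - integral Om (\<lambda>p. fst (grad_h p) * \<phi> p)"
    by (rule integral_Om_by_parts[OF M _ _ _ _ h_lower_cont h_upper_cont _ _ c\<phi> cx])
       (use lower upper vanish in \<open>auto simp: h_ud_eq grad_h_def intro: continuous_intros
          grad_lower_cont grad_upper_cont\<close>)
  then show ?thesis by (simp add: grad)
qed

text \<open>In the vertical direction the boundary terms at the interface z = -H cancel because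
  h_ud is continuous there; those at z = -H-\<delta> and at the top of the box vanish with \<phi>.\<close>
lemma weak_deriv_snd:
  assumes "test_fn Om \<phi>"
  shows "integral Om (\<lambda>p. h_ud H \<delta> hb h u p * snd (grad2 \<phi> p)) = - integral Om (\<lambda>p. snd (grad_h p) * \<phi> p)"
proof -
  obtain M where M: "height_bound M" using height_bound_exists by blast
  obtain \<phi>x \<phi>z where d: "\<And>p. (\<phi> has_derivative (\<lambda>v. fst v * \<phi>x p + snd v * \<phi>z p)) (at p)"
    and c\<phi>: "continuous_on UNIV \<phi>" and cz: "continuous_on UNIV \<phi>z"
    and grad: "\<And>p. grad2 \<phi> p = (\<phi>x p, \<phi>z p)"
    and vanish: "\<And>p. p \<notin> Om \<Longrightarrow> \<phi> p = 0 \<and> \<phi>x p = 0 \<and> \<phi>z p = 0"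
    by (rule test_fnE[OF assms]) blast
  have c: "continuous_on S \<phi>" "continuous_on S \<phi>z" for S
    using continuous_on_subset[OF c\<phi>] continuous_on_subset[OF cz] by blast+
  have lower: "integral strip (\<lambda>p. h_lower p * \<phi>z p + snd (grad_lower p) * \<phi> p)
      = integral {-L..L} (\<lambda>x. h_lower (x,-H) * \<phi> (x,-H) - h_lower (x,-H-\<delta>) * \<phi> (x,-H-\<delta>))"
  proof (rule integral_cbox_deriv_snd[where Q = "\<lambda>p. h_lower p * \<phi> p"])
    show "continuous_on strip (\<lambda>p. h_lower p * \<phi>z p + snd (grad_lower p) * \<phi> p)"
      by (intro continuous_intros h_lower_cont grad_lower_cont c)
  qed (use delta_pos DERIV_mult'[OF h_lower_DERIV_snd DERIV_partial_snd[OF d]] in auto)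
  have upper: "integral (upper_box M) (\<lambda>p. h_upper p * \<phi>z p + snd (grad_upper p) * \<phi> p)
      = integral {-L..L} (\<lambda>x. h_upper (x,M) * \<phi> (x,M) - h_upper (x,-H) * \<phi> (x,-H))"
  proof (rule integral_cbox_deriv_snd[where Q = "\<lambda>p. h_upper p * \<phi> p"])
    show "continuous_on (upper_box M) (\<lambda>p. h_upper p * \<phi>z p + snd (grad_upper p) * \<phi> p)"
      by (intro continuous_intros h_upper_cont grad_upper_cont c)
  qed (use height_bound_ge[OF M] DERIV_mult'[OF h_upper_DERIV_snd DERIV_partial_snd[OF d]] in auto)
  have "integral {-L..L} (\<lambda>x. h_upper (x,M) * \<phi> (x,M) - h_upper (x,-H) * \<phi> (x,-H))
     = - integral {-L..L} (\<lambda>x. h_lower (x,-H) * \<phi> (x,-H) - h_lower (x,-H-\<delta>) * \<phi> (x,-H-\<delta>))"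
    unfolding integral_neg[symmetric]
    by (rule integral_cong) (use vanish not_in_Om(3) not_in_Om(4)[OF M] h_lower_eq_h_upper_interface in auto)
  then have "integral Om (\<lambda>p. h_ud H \<delta> hb h u p * \<phi>z p) = - integral Om (\<lambda>p. snd (grad_h p) * \<phi> p)"
    by (intro integral_Om_by_parts[OF M _ _ _ _ h_lower_cont h_upper_cont _ _ c\<phi> cz])
       (use lower upper vanish in \<open>auto simp: h_ud_eq grad_h_def intro: continuous_intros
          grad_lower_cont grad_upper_cont\<close>)
  then show ?thesis by (simp add: grad)
qed

lemma piecewise_on_Om:
  fixes f f1 f2 :: "real\<times>real \<Rightarrow> 'b::euclidean_space"
  assumes M: "height_bound M" and c1: "continuous_on strip f1" and c2: "continuous_on (upper_box M) f2"
    and e1: "\<And>p. p \<in> Om \<Longrightarrow> snd p < -H \<Longrightarrow> f p = f1 p"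
    and e2: "\<And>p. p \<in> Om \<Longrightarrow> -H \<le> snd p \<Longrightarrow> f p = f2 p"
  shows "f measurable_on Om" and "\<exists>B. \<forall>p\<in>Om. norm (f p) \<le> B"
proof -
  show "f measurable_on Om"
  proof (rule measurable_on_split_horizontal[OF Om_open])
    show "continuous_on (Om \<inter> {p. snd p < -H}) f1"
      by (rule continuous_on_subset[OF c1]) (use Om_lower_in_strip in blast)
    show "continuous_on (Om \<inter> {p. -H < snd p}) f2"
      by (rule continuous_on_subset[OF c2]) (use Om_upper_in_box[OF M] in \<open>force simp: less_imp_le\<close>)
  qed (use e1 e2 in auto)
  obtain B1 where B1: "\<forall>p\<in>strip. norm (f1 p) \<le> B1"
    using compact_imp_bounded[OF compact_continuous_image[OF c1 compact_cbox]] by (auto simp: bounded_iff)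
  obtain B2 where B2: "\<forall>p\<in>upper_box M. norm (f2 p) \<le> B2"
    using compact_imp_bounded[OF compact_continuous_image[OF c2 compact_cbox]] by (auto simp: bounded_iff)
  have "norm (f p) \<le> max B1 B2" if p: "p \<in> Om" for p
  proof (cases "snd p < -H")
    case True
    then show ?thesis using e1 B1 Om_lower_in_strip p by fastforce
  next
    case False
    then show ?thesis using e2 B2 Om_upper_in_box[OF M p] p by fastforce
  qed
  then show "\<exists>B. \<forall>p\<in>Om. norm (f p) \<le> B" by blast
qed

lemma h_ud_L2: "L2_on Om (h_ud H \<delta> hb h u)"
proof -
  obtain M where M: "height_bound M" using height_bound_exists by blast
  note pw = piecewise_on_Om[OF M h_lower_cont h_upper_cont, of "h_ud H \<delta> hb h u"]
  obtain B where "\<forall>p\<in>Om. norm (h_ud H \<delta> hb h u p) \<le> B" using pw(2) by (auto simp: h_ud_eq)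
  then show ?thesis using pw(1) by (intro L2_on_bounded_measurable[OF _ Om_lmeasurable]) (auto simp: h_ud_eq)
qed

lemma grad_h_L2: "L2_on Om grad_h"
proof -
  obtain M where M: "height_bound M" using height_bound_exists by blast
  note pw = piecewise_on_Om[OF M grad_lower_cont grad_upper_cont, of grad_h]
  obtain B where "\<forall>p\<in>Om. norm (grad_h p) \<le> B" using pw(2) by (auto simp: grad_h_def)
  then show ?thesis using pw(1) by (intro L2_on_bounded_measurable[OF _ Om_lmeasurable]) (auto simp: grad_h_def)
qed

lemma h_ud_H1: "H1_on Om (h_ud H \<delta> hb h u) grad_h"
  unfolding H1_on_def weak_grad_def using h_ud_L2 grad_h_L2 weak_deriv_fst weak_deriv_snd by blast

definition "energy_density p = sigma_d H \<delta> \<sigma> p * (norm (grad_h p))\<^sup>2"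

lemma strip_subset_sigma_domain: "strip \<subseteq> sigma_domain"
  using delta_lt_1 by (auto simp: cbox_Pair_iff)

lemma density_integrable: "energy_density integrable_on Om"
proof -
  obtain M where M: "height_bound M" using height_bound_exists by blast
  have c1: "continuous_on strip (\<lambda>p. \<delta> * \<sigma> p * (norm (grad_lower p))\<^sup>2)"
    by (intro continuous_intros grad_lower_cont continuous_on_subset[OF sigma_cont strip_subset_sigma_domain])
  have c2: "continuous_on (upper_box M) (\<lambda>p. (norm (grad_upper p))\<^sup>2)"
    by (intro continuous_intros grad_upper_cont)
  note pw = piecewise_on_Om[OF M c1 c2, of energy_density]
  obtain B where "\<forall>p\<in>Om. norm (energy_density p) \<le> B"
    using pw(2) by (auto simp: energy_density_def sigma_d_def grad_h_def)
  then show ?thesis using pw(1)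
    by (intro integrable_on_bounded_measurable[OF _ Om_lmeasurable]) (auto simp: energy_density_def sigma_d_def grad_h_def)
qed

lemma integral_density_mem: "integral Om energy_density \<in> dirichlet_energies L H \<sigma> hb h \<delta> u"
  unfolding dirichlet_energies_def energy_density_def mem_Collect_eq
  by (rule exI[of _ "h_ud H \<delta> hb h u"], rule exI[of _ grad_h]) (simp add: h_ud_H1 H10_on_zero)

lemma sigma_d_nonneg: "p \<in> Om \<Longrightarrow> 0 \<le> sigma_d H \<delta> \<sigma> p"
proof (cases "snd p < -H")
  case True
  assume "p \<in> Om"
  then have "0 < \<sigma> p" using Om_lower_in_strip[OF _ True] strip_subset_sigma_domain sigma_pos by blast
  then show ?thesis using True delta_pos by (simp add: sigma_d_def)
qed (simp add: sigma_d_def)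

lemma dirichlet_energies_bdd_below: "bdd_below (dirichlet_energies L H \<sigma> hb h \<delta> u)"
proof (rule bdd_belowI[of _ 0])
  fix y assume "y \<in> dirichlet_energies L H \<sigma> hb h \<delta> u"
  then obtain G :: "real\<times>real \<Rightarrow> real\<times>real" where y: "y = integral Om (\<lambda>p. sigma_d H \<delta> \<sigma> p * (norm (G p))\<^sup>2)"
    unfolding dirichlet_energies_def by blast
  show "0 \<le> y"
  proof (cases "(\<lambda>p. sigma_d H \<delta> \<sigma> p * (norm (G p))\<^sup>2) integrable_on Om")
    case True
    then show ?thesis unfolding y by (rule integral_nonneg) (simp add: sigma_d_nonneg)
  qed (simp add: y not_integrable_integral)
qed

lemma Inf_dirichlet_le_density: "Inf (dirichlet_energies L H \<sigma> hb h \<delta> u) \<le> integral Om energy_density"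
  by (rule cInf_lower[OF integral_density_mem dirichlet_energies_bdd_below])

section \<open>Bounding the Dirichlet energy\<close>

definition "lower_density_bound x = 2 * sigma_sup * m * (1 + (u x)\<^sup>2 + (u1 x)\<^sup>2)"
definition "upper_density_bound x =
  2 * (4 * Dh_sup\<^sup>2 + m * (1 + H + H\<^sup>2 + \<bar>u x\<bar>)) + 2 * (Dh_sup\<^sup>2 + m) * (u1 x)\<^sup>2"

lemma density_le_lower:
  assumes p: "p \<in> Om" and below: "snd p < -H"
  shows "energy_density p \<le> lower_density_bound (fst p) / \<delta>"
proof -
  obtain x z where pe: "p = (x,z)" by (cases p)
  have x: "x \<in> {-L..L}" and z: "z \<in> {-H-\<delta>..-H}" using p below pe by (auto simp: Omega_d_def)
  have w: "-H \<le> u x" using u_ge x by blast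
  let ?q = "(x, stretch z, u x)"
  have T: "(\<bar>Dhb ?q (1,0,0)\<bar> + \<bar>Dhb ?q (0,1,0)\<bar>)\<^sup>2 \<le> m * (1 + (u x)\<^sup>2)"
    by (rule power2_le_of_abs_le_sqrt) (use hb_bound1 x stretch_mem[OF z] w m_pos in auto)
  have W: "(Dhb ?q (0,0,1))\<^sup>2 \<le> m"
    by (rule power2_le_of_abs_le_sqrt) (use hb_bound2 x stretch_mem[OF z] w m_pos in auto)
  have \<sigma>: "0 \<le> \<sigma> p" "\<sigma> p \<le> sigma_sup"
    using Om_lower_in_strip[OF p below] strip_subset_sigma_domain sigma_pos sigma_le_sigma_sup
    by (auto simp: less_imp_le)
  have "energy_density p = \<delta> * \<sigma> p * ((Dhb ?q (1,0,0) + Dhb ?q (0,0,1) * u1 x)\<^sup>2 + (Dhb ?q (0,1,0) / \<delta>)\<^sup>2)"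
    using below pe by (simp add: energy_density_def sigma_d_def grad_h_def grad_lower_def lift_lower_def norm_Pair power_divide)
  also have "\<dots> \<le> \<sigma> p * (2 * (m * (1 + (u x)\<^sup>2)) + 2 * m * (u1 x)\<^sup>2) / \<delta>"
    using delta_pos delta_lt_1 \<sigma>(1) chain_rule_square_bound[OF T W] by (intro stretched_square_le) auto
  also have "\<dots> \<le> sigma_sup * (2 * (m * (1 + (u x)\<^sup>2)) + 2 * m * (u1 x)\<^sup>2) / \<delta>"
    using delta_pos \<sigma>(2) m_pos by (intro divide_right_mono mult_right_mono) auto
  also have "\<dots> = lower_density_bound (fst p) / \<delta>"
    using pe by (simp add: lower_density_bound_def algebra_simps)
  finally show ?thesis .
qed

lemma Dh_squares_le:
  assumes x: "x \<in> {-L..L}" and z: "-H \<le> z" "z < w"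
  shows "(\<bar>Dh (x,z,w) (1,0,0)\<bar> + \<bar>Dh (x,z,w) (0,1,0)\<bar>)\<^sup>2 \<le> 4 * Dh_sup\<^sup>2 + m * (1 + H + H\<^sup>2 + \<bar>w\<bar>)"
    and "(Dh (x,z,w) (0,0,1))\<^sup>2 \<le> Dh_sup\<^sup>2 + m"
proof -
  have growth: "0 \<le> m * (1 + H + H\<^sup>2 + \<bar>w\<bar>)" using m_pos H_pos by simp
  have "(\<bar>Dh (x,z,w) (1,0,0)\<bar> + \<bar>Dh (x,z,w) (0,1,0)\<bar>)\<^sup>2 \<le> 4 * Dh_sup\<^sup>2 + m * (1 + H + H\<^sup>2 + \<bar>w\<bar>)
      \<and> (Dh (x,z,w) (0,0,1))\<^sup>2 \<le> Dh_sup\<^sup>2 + m"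
  proof (cases "w < -H + 1")
    case True
    then have "norm (Dh (x,z,w)) \<le> Dh_sup" using x z by (intro norm_Dh_le_Dh_sup) auto
    note unit = abs_blinfun_unit_le[OF this]
    have "(\<bar>Dh (x,z,w) (1,0,0)\<bar> + \<bar>Dh (x,z,w) (0,1,0)\<bar>)\<^sup>2 \<le> (2 * Dh_sup)\<^sup>2"
      by (rule power_mono) (use unit in auto)
    moreover have "(Dh (x,z,w) (0,0,1))\<^sup>2 \<le> Dh_sup\<^sup>2"
      using power_mono[OF unit(3) abs_ge_zero, of 2] by simp
    ultimately show ?thesis using growth m_pos by (simp add: power_mult_distrib)
  next
    case False
    then have Hw: "1 \<le> H + w" by simp
    have "(\<bar>Dh (x,z,w) (1,0,0)\<bar> + \<bar>Dh (x,z,w) (0,1,0)\<bar>)\<^sup>2 \<le> m * (1 + w\<^sup>2) / (H + w)"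
      by (rule power2_le_of_abs_le_sqrt) (use h_bound1 x z Hw m_pos in auto)
    also have "\<dots> \<le> m * (1 + H + H\<^sup>2 + \<bar>w\<bar>)"
      using one_plus_square_le_growth[OF H_pos Hw] Hw m_pos
      by (simp add: divide_le_eq mult.commute mult_left_mono)
    finally have T: "(\<bar>Dh (x,z,w) (1,0,0)\<bar> + \<bar>Dh (x,z,w) (0,1,0)\<bar>)\<^sup>2 \<le> m * (1 + H + H\<^sup>2 + \<bar>w\<bar>)" .
    have "(Dh (x,z,w) (0,0,1))\<^sup>2 \<le> m / (H + w)"
      by (rule power2_le_of_abs_le_sqrt) (use h_bound2 x z Hw m_pos in auto)
    also have "\<dots> \<le> m" using Hw m_pos by (simp add: divide_le_eq)
    finally show ?thesis using T by (simp add: add_increasing)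
  qed
  then show "(\<bar>Dh (x,z,w) (1,0,0)\<bar> + \<bar>Dh (x,z,w) (0,1,0)\<bar>)\<^sup>2 \<le> 4 * Dh_sup\<^sup>2 + m * (1 + H + H\<^sup>2 + \<bar>w\<bar>)"
    and "(Dh (x,z,w) (0,0,1))\<^sup>2 \<le> Dh_sup\<^sup>2 + m" by auto
qed

lemma density_le_upper:
  assumes p: "p \<in> Om" and above: "-H \<le> snd p"
  shows "energy_density p \<le> upper_density_bound (fst p)"
proof -
  obtain x z where pe: "p = (x,z)" by (cases p)
  have x: "x \<in> {-L..L}" and z: "-H \<le> z" "z < u x" using p above pe by (auto simp: Omega_d_def)
  let ?q = "(x, z, u x)"
  have "energy_density p = (Dh ?q (1,0,0) + Dh ?q (0,0,1) * u1 x)\<^sup>2 + (Dh ?q (0,1,0))\<^sup>2"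
    using above pe by (simp add: energy_density_def sigma_d_def grad_h_def grad_upper_def lift_upper_def norm_Pair)
  also have "\<dots> \<le> upper_density_bound (fst p)"
    using chain_rule_square_bound[OF Dh_squares_le[OF x z]] pe by (simp add: upper_density_bound_def)
  finally show ?thesis .
qed

lemma lower_density_bound_cont: "continuous_on {-L..L} lower_density_bound"
  unfolding lower_density_bound_def by (intro continuous_intros u_cont u1_cont)

lemma upper_density_bound_cont: "continuous_on {-L..L} upper_density_bound"
  unfolding upper_density_bound_def by (intro continuous_intros u_cont u1_cont)

lemma density_bounds_nonneg: "0 \<le> lower_density_bound x" "0 \<le> upper_density_bound x"
  using one_le_sigma_sup m_pos H_pos unfolding lower_density_bound_def upper_density_bound_def
  by (auto intro!: add_nonneg_nonneg mult_nonneg_nonneg)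

text \<open>The strip has height \<delta>, which cancels the factor 1/\<delta> of the lower density bound.\<close>
lemma integral_energy_density_le:
  assumes M: "height_bound M"
  shows "integral Om energy_density
    \<le> integral {-L..L} lower_density_bound + (M + H) * integral {-L..L} upper_density_bound"
proof -
  let ?lo = "\<lambda>p. lower_density_bound (fst p) / \<delta>" and ?up = "\<lambda>p. upper_density_bound (fst p)"
  have c1: "continuous_on strip ?lo"
    using delta_pos by (intro continuous_intros continuous_on_cbox_fst lower_density_bound_cont) auto
  have c2: "continuous_on (upper_box M) ?up" by (rule continuous_on_cbox_fst[OF upper_density_bound_cont])
  have IPsi: "((\<lambda>p. if snd p < -H then ?lo p else ?up p) has_integral
      (integral strip ?lo + integral (upper_box M) ?up)) (strip \<union> upper_box M)"
    by (rule has_integral_stacked_boxes[OF subset_refl c1 c2]) auto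
  have IE: "((\<lambda>p. if p \<in> Om then energy_density p else 0) has_integral integral Om energy_density)
      (strip \<union> upper_box M)"
    using has_integral_restrict[OF Om_subset_boxes[OF M]] density_integrable has_integral_integral by blast
  have "integral Om energy_density \<le> integral strip ?lo + integral (upper_box M) ?up"
    by (rule has_integral_le[OF IE IPsi])
       (use density_le_lower density_le_upper density_bounds_nonneg delta_pos in auto)
  moreover have "integral strip ?lo = integral {-L..L} lower_density_bound"
    using integral_cbox_depends_on_fst[OF c1] delta_pos by simp
  moreover have "integral (upper_box M) ?up = (M + H) * integral {-L..L} upper_density_bound"
    using integral_cbox_depends_on_fst[OF c2 height_bound_ge[OF M]] by simp
  ultimately show ?thesis by simp
qed

lemma Inf_dirichlet_le_poly:
  assumes M: "height_bound M"
  shows "Inf (dirichlet_energies L H \<sigma> hb h \<delta> u)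
    \<le> 4 * L * sigma_sup * m * (1 + M\<^sup>2) + 2 * sigma_sup * m * slope_energy
      + (M + H) * (4 * L * (4 * Dh_sup\<^sup>2 + m * (1 + H + H\<^sup>2)) + 4 * L * m * M
        + 2 * (Dh_sup\<^sup>2 + m) * slope_energy)"
proof -
  have uM: "\<bar>u x\<bar> \<le> M" "(u x)\<^sup>2 \<le> M\<^sup>2" if "x \<in> {-L..L}" for x
    using M that power_mono[of "\<bar>u x\<bar>" M 2] unfolding height_bound_def by auto
  have lo: "integral {-L..L} lower_density_bound
      \<le> integral {-L..L} (\<lambda>x. 2 * sigma_sup * m * (1 + M\<^sup>2) + 2 * sigma_sup * m * (u1 x)\<^sup>2)"
    using uM one_le_sigma_sup m_pos
    by (intro integral_le integrable_continuous_real lower_density_bound_cont integral_affine_u1_square(1))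
       (auto simp: lower_density_bound_def algebra_simps intro!: mult_left_mono)
  have up: "integral {-L..L} upper_density_bound
      \<le> integral {-L..L} (\<lambda>x. 2 * (4 * Dh_sup\<^sup>2 + m * (1 + H + H\<^sup>2 + M)) + 2 * (Dh_sup\<^sup>2 + m) * (u1 x)\<^sup>2)"
    using uM m_pos
    by (intro integral_le integrable_continuous_real upper_density_bound_cont integral_affine_u1_square(1))
       (auto simp: upper_density_bound_def algebra_simps intro!: mult_left_mono)
  have "Inf (dirichlet_energies L H \<sigma> hb h \<delta> u)
      \<le> integral {-L..L} lower_density_bound + (M + H) * integral {-L..L} upper_density_bound"
    using Inf_dirichlet_le_density integral_energy_density_le[OF M] by linarith
  also have "\<dots> \<le> (2 * sigma_sup * m * (1 + M\<^sup>2) * (2 * L) + 2 * sigma_sup * m * slope_energy)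
      + (M + H) * (2 * (4 * Dh_sup\<^sup>2 + m * (1 + H + H\<^sup>2 + M)) * (2 * L) + 2 * (Dh_sup\<^sup>2 + m) * slope_energy)"
    using lo up height_bound_ge[OF M] unfolding integral_affine_u1_square(2)
    by (intro add_mono mult_left_mono) auto
  finally show ?thesis by (simp add: algebra_simps)
qed

end

context two_layer_data
begin

lemma Inf_dirichlet_le_quadratic:
  assumes a: "0 < a"
  obtains k1 k0 where "\<And>u u1 u2 \<delta>. barS0 L H u u1 u2 \<Longrightarrow> 0 < \<delta> \<Longrightarrow> \<delta> < 1 \<Longrightarrow>
    Inf (dirichlet_energies L H \<sigma> hb h \<delta> u)
      \<le> a / 4 * (integral {-L..L} (\<lambda>x. (u1 x)\<^sup>2))\<^sup>2 + k1 * integral {-L..L} (\<lambda>x. (u1 x)\<^sup>2) + k0"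
proof -
  define A where "A = 4 * L * m * (sigma_sup + 1)"
  define B where "B = 2 * (Dh_sup\<^sup>2 + m)"
  define C where "C = 4 * L * (4 * Dh_sup\<^sup>2 + m * (1 + H + H\<^sup>2)) + 4 * L * m * H"
  define D where "D = 2 * sigma_sup * m + H * B"
  define E where "E = 4 * L * sigma_sup * m + H * (4 * L * (4 * Dh_sup\<^sup>2 + m * (1 + H + H\<^sup>2)))"
  define e where "e = min 1 (a / (4 * (A + B)))"
  define k where "k = L / (2 * e)"
  have AB: "0 < A" "0 \<le> B" using L_pos m_pos one_le_sigma_sup by (simp_all add: A_def B_def)
  have "e * (A + B) \<le> a / (4 * (A + B)) * (A + B)"
    using AB by (intro mult_right_mono) (auto simp: e_def)
  also have "\<dots> = a / 4" using AB by (simp add: field_simps)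
  finally have e: "0 < e" "e \<le> 1" "e * (A + B) \<le> a / 4"
    using a AB by (auto simp: e_def)
  show thesis
  proof (rule that)
    fix u u1 u2 :: "real \<Rightarrow> real" and \<delta> :: real
    assume "barS0 L H u u1 u2" "0 < \<delta>" "\<delta> < 1"
    then interpret graph_profile L H m \<sigma> hb h Dhb Dh u u1 u2 \<delta>
      by (intro graph_profile.intro graph_profile_axioms.intro two_layer_data_axioms)
    let ?X = slope_energy
    have "height_bound (e * ?X + k)" using height_bound_young[OF e(1)] by (simp add: k_def)
    from Inf_dirichlet_le_poly[OF this]
    have "Inf (dirichlet_energies L H \<sigma> hb h \<delta> u)
        \<le> A * (e * ?X + k)\<^sup>2 + B * (e * ?X + k) * ?X + C * (e * ?X + k) + D * ?X + E"
      by (simp add: A_def B_def C_def D_def E_def power2_eq_square algebra_simps)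
    also have "\<dots> \<le> a / 4 * ?X\<^sup>2 + (2 * A * e * k + B * k + C * e + D) * ?X + (A * k\<^sup>2 + C * k + E)"
      by (rule substituted_quadratic_le) (use AB e in auto)
    finally show "Inf (dirichlet_energies L H \<sigma> hb h \<delta> u)
        \<le> a / 4 * ?X\<^sup>2 + (2 * A * e * k + B * k + C * e + D) * ?X + (A * k\<^sup>2 + C * k + E)" .
  qed
qed

end

theorem mainTheorem7:
  fixes L H \<beta> \<tau> a m :: real
    and \<sigma> :: "real \<times> real \<Rightarrow> real"
    and hb h :: "real \<times> real \<times> real \<Rightarrow> real"
    and D\<sigma> :: "real \<times> real \<Rightarrow> (real \<times> real) \<Rightarrow>\<^sub>L real"
    and Dhb Dh :: "real \<times> real \<times> real \<Rightarrow> (real \<times> real \<times> real) \<Rightarrow>\<^sub>L real"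
  assumes L_pos: "L > 0" and H_pos: "H > 0"
    and beta_pos: "\<beta> > 0" and tau_nonneg: "\<tau> \<ge> 0" and a_pos: "a > 0" and m_pos: "m > 0"
    and sigma_C2: "C2_on ({-L..L} \<times> {-H-1..-H}) \<sigma> D\<sigma>"
    and sigma_pos: "\<forall>p \<in> {-L..L} \<times> {-H-1..-H}. \<sigma> p > 0"
    and hb_C2: "C2_on ({-L..L} \<times> {-H-1..-H} \<times> {-H..}) hb Dhb"
    and h_C2: "C2_on ({-L..L} \<times> {-H..} \<times> {-H..}) h Dh"
    and interface_val: "\<forall>x\<in>{-L..L}. \<forall>w\<ge>-H. hb (x, -H, w) = h (x, -H, w)"
    and interface_flux: "\<forall>x\<in>{-L..L}. \<forall>w\<ge>-H.
          \<sigma> (x, -H) * Dhb (x, -H, w) (0, 1, 0) = Dh (x, -H, w) (0, 1, 0)"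
    and hb_bound1: "\<forall>x\<in>{-L..L}. \<forall>z\<in>{-H-1..-H}. \<forall>w\<ge>-H.
          \<bar>Dhb (x, z, w) (1, 0, 0)\<bar> + \<bar>Dhb (x, z, w) (0, 1, 0)\<bar> \<le> sqrt (m * (1 + w\<^sup>2))"
    and hb_bound2: "\<forall>x\<in>{-L..L}. \<forall>z\<in>{-H-1..-H}. \<forall>w\<ge>-H.
          \<bar>Dhb (x, z, w) (0, 0, 1)\<bar> \<le> sqrt m"
    and h_bound1: "\<forall>x\<in>{-L..L}. \<forall>z\<ge>-H. \<forall>w>-H.
          \<bar>Dh (x, z, w) (1, 0, 0)\<bar> + \<bar>Dh (x, z, w) (0, 1, 0)\<bar> \<le> sqrt (m * (1 + w\<^sup>2) / (H + w))"
    and h_bound2: "\<forall>x\<in>{-L..L}. \<forall>z\<ge>-H. \<forall>w>-H.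
          \<bar>Dh (x, z, w) (0, 0, 1)\<bar> \<le> sqrt (m / (H + w))"
  shows "\<exists>c1>0. \<forall>u u1 u2 \<delta>. barS0 L H u u1 u2 \<and> 0 < \<delta> \<and> \<delta> < 1 \<longrightarrow>
           \<beta> / 2 * integral {-L..L} (\<lambda>x. (u2 x)\<^sup>2) + a / 4 * integral {-L..L} (\<lambda>x. (u1 x)\<^sup>2)
             \<le> E_d \<beta> \<tau> a L H \<sigma> hb h \<delta> u u1 u2 + c1"
proof -
  interpret two_layer_data L H m \<sigma> hb h Dhb Dh
    using C2_onD(2)[OF sigma_C2] by unfold_locales (use assms in auto)
  obtain k1 k0 where Inf: "\<And>u u1 u2 \<delta>. barS0 L H u u1 u2 \<Longrightarrow> 0 < \<delta> \<Longrightarrow> \<delta> < 1 \<Longrightarrow>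
      Inf (dirichlet_energies L H \<sigma> hb h \<delta> u)
        \<le> a / 4 * (integral {-L..L} (\<lambda>x. (u1 x)\<^sup>2))\<^sup>2 + k1 * integral {-L..L} (\<lambda>x. (u1 x)\<^sup>2) + k0"
    using Inf_dirichlet_le_quadratic[OF a_pos] by blast
  define c1 where "c1 = max 1 (k0 / 2 + 2 * (a / 4 + k1 / 2)\<^sup>2 / a)"
  show ?thesis
  proof (intro exI[of _ c1] conjI allI impI)
    fix u u1 u2 :: "real \<Rightarrow> real" and \<delta> :: real
    assume "barS0 L H u u1 u2 \<and> 0 < \<delta> \<and> \<delta> < 1"
    let ?X = "integral {-L..L} (\<lambda>x. (u1 x)\<^sup>2)"
    have "0 \<le> ?X"
      by (cases "(\<lambda>x. (u1 x)\<^sup>2) integrable_on {-L..L}") (auto intro: integral_nonneg simp: not_integrable_integral)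
    then have "a / 4 * ?X \<le> (\<tau> / 2 + a / 4 * ?X) * ?X - 1 / 2 * Inf (dirichlet_energies L H \<sigma> hb h \<delta> u)
        + (k0 / 2 + 2 * (a / 4 + k1 / 2)\<^sup>2 / a)"
      using quadratic_absorption[OF a_pos tau_nonneg _ Inf] \<open>barS0 L H u u1 u2 \<and> 0 < \<delta> \<and> \<delta> < 1\<close> by blast
    then show "\<beta> / 2 * integral {-L..L} (\<lambda>x. (u2 x)\<^sup>2) + a / 4 * integral {-L..L} (\<lambda>x. (u1 x)\<^sup>2)
        \<le> E_d \<beta> \<tau> a L H \<sigma> hb h \<delta> u u1 u2 + c1"
      unfolding E_d_def c1_def by linarith
  qed (simp add: c1_def)
qed

end
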